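(* In the queueing model of the context, fix a class $k$, $\theta\ge0$ and $\vec z\in[0,1]^n$. Writing $\Lambda(\vec z)=\sum_{i=1}^n\lambda_i(1-z_i)$ and $\Lambda_{\ge k}(\vec z)=\sum_{i\ge k}\lambda_i(1-z_i)$, the service-arrival joint transform of a single class $k$ overhead chain is \[ \widetilde{\mathcal O}_k(\theta,\vec z)=\frac{\widetilde{C_k}(\theta+\Lambda(\vec z))\,\widetilde{D_k}(\theta+\Lambda_{\ge k}(\vec z)+\lambda_{<k})}{1-\widetilde{C_k}(\theta+\Lambda(\vec z))\bigl(\widetilde{D_k}(\theta+\Lambda(\vec z))-\widetilde{D_k}(\theta+\Lambda_{\ge k}(\vec z)+\lambda_{<k})\bigr)}. \]
   Context: Model: a single server; job classes $1,\dots,n$. Class $i$ jobs arrive according to independent Poisson processes of rates $\lambda_i>0$; original sizes of class $i$ jobs are i.i.d. with positive distribution $S_i$. Scheduling is preemptive priority (lower index = higher priority, FCFS within class, preempt-resume) with preemption overhead: (a) a job arriving to an empty system begins service; (b) when a class $k$ job in service is preempted by the arrival of a class $<k$ job, its service stops and a class $k$ pause begins; (c) whenever a job or a pause completes and jobs remain, the best-priority job is identified: if it is a previously paused class $k$ job a class $k$ resume begins, otherwise that job begins service; (d) when a class $k$ resume completes, if any class $<k$ job arrived during the resume it fails and a class $k$ pause begins, otherwise it succeeds and the class $k$ job continues service. Pauses and resumes are nonpreemptible; class $k$ pause lengths are i.i.d. $\sim C_k$, class $k$ resume lengths i.i.d. $\sim D_k$, independent of everything else. $\lambda_{<k}=\sum_{i<k}\lambda_i$;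 $\widetilde X(\theta)=\mathbb E[e^{-\theta X}]$. A class $k$ overhead chain is the sequence of pause and resume overheads between a class $k$ job being preempted and it next continuing service towards its original size (pause–resume pairs, continuing as long as resumes fail). If $L$ is its total length and $N_i$ the number of class $i$ arrivals during it, its service-arrival joint transform is $\widetilde{\mathcal O}_k(\theta,\vec z)=\mathbb E[e^{-\theta L}\prod_{i=1}^n z_i^{N_i}]$. *)

theory Defs
  imports "HOL-Probability.Probability"
begin

definition lst :: "real measure \<Rightarrow> real \<Rightarrow> real" where
  "lst mu s = integral\<^sup>L mu (\<lambda>x. exp (- s * x))"

text \<open>Sources of randomness of a class k overhead chain: the m-th interarrival time
  (m = 0,1,...) of class i (a Poisson process is given by i.i.d. exponential
  interarrival times), and the length of the j-th pause and j-th resume (j = 0,1,...).\<close>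
datatype src = Arr nat nat | Pause nat | Resume nat

definition src_rv ::
  "(nat \<Rightarrow> nat \<Rightarrow> 'a \<Rightarrow> real) \<Rightarrow> (nat \<Rightarrow> 'a \<Rightarrow> real) \<Rightarrow> (nat \<Rightarrow> 'a \<Rightarrow> real) \<Rightarrow> src \<Rightarrow> 'a \<Rightarrow> real" where
  "src_rv A Cs Ds s = (case s of Arr i m \<Rightarrow> A i m | Pause j \<Rightarrow> Cs j | Resume j \<Rightarrow> Ds j)"

text \<open>Time of the m-th (0-based) class i arrival, measured in overhead time from the preemption.\<close>
definition arr_time :: "(nat \<Rightarrow> nat \<Rightarrow> 'a \<Rightarrow> real) \<Rightarrow> nat \<Rightarrow> nat \<Rightarrow> 'a \<Rightarrow> real" where
  "arr_time A i m \<omega> = (\<Sum>l\<le>m. A i l \<omega>)"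

definition arr_count :: "(nat \<Rightarrow> nat \<Rightarrow> 'a \<Rightarrow> real) \<Rightarrow> nat \<Rightarrow> real \<Rightarrow> real \<Rightarrow> 'a \<Rightarrow> nat" where
  "arr_count A i a b \<omega> = card {m. a < arr_time A i m \<omega> \<and> arr_time A i m \<omega> \<le> b}"

definition round_start :: "(nat \<Rightarrow> 'a \<Rightarrow> real) \<Rightarrow> (nat \<Rightarrow> 'a \<Rightarrow> real) \<Rightarrow> nat \<Rightarrow> 'a \<Rightarrow> real" where
  "round_start Cs Ds j \<omega> = (\<Sum>l<j. Cs l \<omega> + Ds l \<omega>)"

definition resume_fails ::
  "nat \<Rightarrow> (nat \<Rightarrow> nat \<Rightarrow> 'a \<Rightarrow> real) \<Rightarrow> (nat \<Rightarrow> 'a \<Rightarrow> real) \<Rightarrow> (nat \<Rightarrow> 'a \<Rightarrow> real) \<Rightarrow> nat \<Rightarrow> 'a \<Rightarrow> bool" where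
  "resume_fails k A Cs Ds j \<omega> =
     (\<exists>i\<in>{1..<k}. arr_count A i (round_start Cs Ds j \<omega> + Cs j \<omega>)
                                  (round_start Cs Ds j \<omega> + Cs j \<omega> + Ds j \<omega>) \<omega> > 0)"

text \<open>Total length L of the chain: all pause-resume pairs up to and including the first
  successful resume. (On the null event that no resume ever succeeds the value is
  irrelevant.)\<close>
definition chain_len ::
  "nat \<Rightarrow> (nat \<Rightarrow> nat \<Rightarrow> 'a \<Rightarrow> real) \<Rightarrow> (nat \<Rightarrow> 'a \<Rightarrow> real) \<Rightarrow> (nat \<Rightarrow> 'a \<Rightarrow> real) \<Rightarrow> 'a \<Rightarrow> real" where
  "chain_len k A Cs Ds \<omega> =
     round_start Cs Ds (Suc (LEAST j. \<not> resume_fails k A Cs Ds j \<omega>)) \<omega>"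

definition chain_arrivals ::
  "nat \<Rightarrow> (nat \<Rightarrow> nat \<Rightarrow> 'a \<Rightarrow> real) \<Rightarrow> (nat \<Rightarrow> 'a \<Rightarrow> real) \<Rightarrow> (nat \<Rightarrow> 'a \<Rightarrow> real) \<Rightarrow> nat \<Rightarrow> 'a \<Rightarrow> nat" where
  "chain_arrivals k A Cs Ds i \<omega> = arr_count A i 0 (chain_len k A Cs Ds \<omega>) \<omega>"

definition overhead_transform ::
  "'a measure \<Rightarrow> nat \<Rightarrow> nat \<Rightarrow> (nat \<Rightarrow> nat \<Rightarrow> 'a \<Rightarrow> real) \<Rightarrow> (nat \<Rightarrow> 'a \<Rightarrow> real) \<Rightarrow> (nat \<Rightarrow> 'a \<Rightarrow> real)
     \<Rightarrow> real \<Rightarrow> (nat \<Rightarrow> real) \<Rightarrow> real" where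
  "overhead_transform M n k A Cs Ds \<theta> z =
     integral\<^sup>L M (\<lambda>\<omega>. exp (- \<theta> * chain_len k A Cs Ds \<omega>) *
                        (\<Prod>i\<in>{1..n}. z i ^ chain_arrivals k A Cs Ds i \<omega>))"

end

theory Submission
  imports Defs
begin

text \<open>Given the overhead lengths, the chain occupies consecutive cells of known lengths
  (pause, resume, pause, \<dots>), and since the class \<open>i\<close> arrivals form a Poisson process,
  \<open>E (\<Prod>q. w q ^ N\<^sub>i(cell q)) = exp (- \<lambda>\<^sub>i \<Sum>q. (1 - w q) |cell q|)\<close>; this identity is
  proved from the exponential interarrival times by a renewal equation.
  The chain ends in round \<open>j\<close> iff resumes \<open>0..j-1\<close> fail and resume \<open>j\<close> succeeds. Writing
  each failure indicator as 1 minus the indicator of no class \<open>< k\<close> arrival, which is a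
  generating function evaluated at 0, inclusion--exclusion turns the contribution of round
  \<open>j\<close> into a product over the cells. Averaging over the independent overhead lengths gives
  \<open>(C~(\<theta> + \<Lambda>) (D~(\<theta> + \<Lambda>) - D~(\<theta> + \<Lambda>\<^sub>\<ge>\<^sub>k + \<lambda>\<^sub><\<^sub>k)))\<^sup>j C~(\<theta> + \<Lambda>) D~(\<theta> + \<Lambda>\<^sub>\<ge>\<^sub>k + \<lambda>\<^sub><\<^sub>k)\<close>,
  and the geometric series sums to the formula. For \<open>\<theta> = 0\<close> and \<open>z = 1\<close> the same
  computation shows that the chain ends almost surely.\<close>

section \<open>Poisson arrivals counted over a grid of cells\<close>

definition grid :: "(nat \<Rightarrow> real) \<Rightarrow> nat \<Rightarrow> real" where
  "grid u q = (\<Sum>p<q. u p)"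

text \<open>For nonnegative \<open>u\<close> the cells \<open>(grid u q, grid u (Suc q)]\<close> are disjoint;
  \<open>cell_weight\<close> is the weight \<open>w q\<close> of the cell containing \<open>s\<close> (or 1 past the last cell)
  and \<open>weighted_excess\<close> is the integral of \<open>1 - cell_weight\<close> over \<open>[s, \<infinity>)\<close>.\<close>

definition cell_weight :: "(nat \<Rightarrow> real) \<Rightarrow> (nat \<Rightarrow> real) \<Rightarrow> nat \<Rightarrow> real \<Rightarrow> real" where
  "cell_weight u w Q s = (\<Prod>q<Q. if grid u q < s \<and> s \<le> grid u (Suc q) then w q else 1)"

definition weighted_excess :: "(nat \<Rightarrow> real) \<Rightarrow> (nat \<Rightarrow> real) \<Rightarrow> nat \<Rightarrow> real \<Rightarrow> real" where
  "weighted_excess u w Q s = (\<Sum>q<Q. (1 - w q) * (max (grid u (Suc q)) s - max (grid u q) s))"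

definition tail_pgf :: "real \<Rightarrow> (nat \<Rightarrow> real) \<Rightarrow> (nat \<Rightarrow> real) \<Rightarrow> nat \<Rightarrow> real \<Rightarrow> real" where
  "tail_pgf l u w Q s = exp (- l * weighted_excess u w Q s)"

lemma grid_Suc: "grid u (Suc q) = grid u q + u q"
  by (simp add: grid_def)

lemma grid_mono: assumes "\<And>p. 0 \<le> u p" "q \<le> q'" shows "grid u q \<le> grid u q'"
  unfolding grid_def using assms by (intro sum_mono2) auto

lemma grid_nonneg: assumes "\<And>p. 0 \<le> u p" shows "0 \<le> grid u q"
  unfolding grid_def using assms by (intro sum_nonneg) auto

lemma cell_weight_beyond_grid:
  assumes u: "\<And>p. 0 \<le> u p" and s: "grid u Q < s" shows "cell_weight u w Q s = 1"
  unfolding cell_weight_def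
proof (intro prod.neutral ballI)
  fix q assume "q \<in> {..<Q}"
  then have "grid u (Suc q) \<le> grid u Q" using grid_mono[where u=u, OF u] by auto
  then show "(if grid u q < s \<and> s \<le> grid u (Suc q) then w q else 1) = 1" using s by auto
qed

lemma weighted_excess_beyond_grid:
  assumes u: "\<And>p. 0 \<le> u p" and s: "grid u Q \<le> s" shows "weighted_excess u w Q s = 0"
  unfolding weighted_excess_def
proof (intro sum.neutral ballI)
  fix q assume "q \<in> {..<Q}"
  then have "grid u (Suc q) \<le> grid u Q" "grid u q \<le> grid u Q" using grid_mono[where u=u, OF u] by auto
  then show "(1 - w q) * (max (grid u (Suc q)) s - max (grid u q) s) = 0" using s by auto
qed

lemma weighted_excess_0:
  assumes u: "\<And>p. 0 \<le> u p" shows "weighted_excess u w Q 0 = (\<Sum>q<Q. (1 - w q) * u q)"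
  unfolding weighted_excess_def
  using grid_nonneg[where u=u, OF u] u by (intro sum.cong) (auto simp: grid_Suc)

lemma one_minus_cell_weight:
  assumes u: "\<And>p. 0 \<le> u p"
  shows "1 - cell_weight u w Q s =
    (\<Sum>q<Q. (1 - w q) * ((if grid u q < s then 1 else 0) - (if grid u (Suc q) < s then 1 else 0)))"
proof (induction Q)
  case 0 then show ?case by (simp add: cell_weight_def)
next
  case (Suc Q)
  let ?ind = "\<lambda>q. (if grid u q < s then 1 else 0) - (if grid u (Suc q) < s then 1 else (0::real))"
  show ?case
  proof (cases "grid u Q < s \<and> s \<le> grid u (Suc Q)")
    case True
    then have "cell_weight u w Q s = 1" by (intro cell_weight_beyond_grid[where u=u, OF u]) auto
    moreover have "(\<Sum>q<Q. (1 - w q) * ?ind q) = 0"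
    proof (intro sum.neutral ballI)
      fix q assume "q \<in> {..<Q}"
      then have "grid u (Suc q) \<le> grid u Q" "grid u q \<le> grid u Q" using grid_mono[where u=u, OF u] by auto
      then show "(1 - w q) * ?ind q = 0" using True by auto
    qed
    ultimately show ?thesis using True by (simp add: cell_weight_def)
  next
    case False
    then have "?ind Q = 0" using grid_mono[where u=u, OF u, of Q "Suc Q"] by auto
    moreover have "cell_weight u w (Suc Q) s = cell_weight u w Q s"
      unfolding cell_weight_def prod.lessThan_Suc if_not_P[OF False] by simp
    ultimately show ?thesis using Suc.IH by simp
  qed
qed

lemma DERIV_max_const:
  fixes c s :: real assumes "s \<noteq> c"
  shows "((\<lambda>x. max c x) has_real_derivative (if c < s then 1 else 0)) (at s)"
proof (cases "c < s")
  case True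
  have "((\<lambda>x. max c x) has_real_derivative 1) (at s)"
    by (rule has_field_derivative_transform_within_open[OF DERIV_ident, of "{c<..}"]) (use True in auto)
  then show ?thesis using True by simp
next
  case False
  then have "s < c" using assms by auto
  have "((\<lambda>x. max c x) has_real_derivative 0) (at s)"
    by (rule has_field_derivative_transform_within_open[OF DERIV_const, of "{..<c}"]) (use \<open>s < c\<close> in auto)
  then show ?thesis using False by simp
qed

lemma weighted_excess_has_derivative:
  assumes u: "\<And>p. 0 \<le> u p" and s: "s \<notin> grid u ` {..Q}"
  shows "(weighted_excess u w Q has_real_derivative - (1 - cell_weight u w Q s)) (at s)"
proof -
  have "(weighted_excess u w Q has_real_derivative
     (\<Sum>q<Q. (1 - w q) * ((if grid u (Suc q) < s then 1 else 0) - (if grid u q < s then 1 else 0)))) (at s)"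
    unfolding weighted_excess_def
  proof (intro DERIV_sum DERIV_cmult DERIV_diff DERIV_max_const)
    fix q assume "q \<in> {..<Q}"
    then show "s \<noteq> grid u (Suc q)" "s \<noteq> grid u q" using s by auto
  qed
  moreover have "(\<Sum>q<Q. (1 - w q) * ((if grid u (Suc q) < s then 1 else 0) - (if grid u q < s then 1 else 0)))
     = - (1 - cell_weight u w Q s)"
    unfolding one_minus_cell_weight[OF u] sum_negf[symmetric] by (intro sum.cong) auto
  ultimately show ?thesis by simp
qed

lemma cell_weight_nonneg: assumes "\<And>q. 0 \<le> w q" shows "0 \<le> cell_weight u w Q s"
  unfolding cell_weight_def using assms by (intro prod_nonneg) auto

lemma cell_weight_le_1: assumes "\<And>q. 0 \<le> w q" "\<And>q. w q \<le> 1" shows "cell_weight u w Q s \<le> 1"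
  unfolding cell_weight_def using assms by (intro prod_le_1) auto

lemma tail_pgf_pos: "0 < tail_pgf l u w Q s"
  by (simp add: tail_pgf_def)

lemma tail_pgf_beyond_grid:
  assumes u: "\<And>p. 0 \<le> u p" and s: "grid u Q \<le> s" shows "tail_pgf l u w Q s = 1"
  by (simp add: tail_pgf_def weighted_excess_beyond_grid[where u=u, OF u s])

lemma tail_pgf_le_1:
  assumes "0 \<le> l" "\<And>q. w q \<le> 1" "\<And>p. 0 \<le> u p" shows "tail_pgf l u w Q s \<le> 1"
proof -
  have "0 \<le> weighted_excess u w Q s" unfolding weighted_excess_def
  proof (intro sum_nonneg mult_nonneg_nonneg)
    fix q
    have "grid u q \<le> grid u (Suc q)" using grid_mono[where u=u, OF assms(3)] by auto
    then show "0 \<le> max (grid u (Suc q)) s - max (grid u q) s" by (auto simp: max_def)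
    show "0 \<le> 1 - w q" using assms(2)[of q] by simp
  qed
  then show ?thesis unfolding tail_pgf_def using assms(1) by simp
qed

lemma continuous_on_tail_pgf: "continuous_on UNIV (tail_pgf l u w Q)"
  unfolding tail_pgf_def weighted_excess_def by (intro continuous_intros)

lemma cell_weight_measurable[measurable]: "cell_weight u w Q \<in> borel_measurable borel"
  unfolding cell_weight_def
proof (rule borel_measurable_prod)
  fix q
  have "{x \<in> space borel. grid u q < x \<and> x \<le> grid u (Suc q)} = {grid u q<..grid u (Suc q)}" by auto
  then have S: "{x \<in> space borel. grid u q < x \<and> x \<le> grid u (Suc q)} \<in> sets borel" by simp
  show "(\<lambda>s. if grid u q < s \<and> s \<le> grid u (Suc q) then w q else 1) \<in> borel_measurable borel"
    by (rule measurable_If[OF _ _ S]) auto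
qed

lemma tail_pgf_measurable[measurable]: "tail_pgf l u w Q \<in> borel_measurable borel"
  by (rule borel_measurable_continuous_onI[OF continuous_on_tail_pgf])

text \<open>Away from the grid points, \<open>tail_pgf\<close> solves \<open>h' = l (1 - cell_weight) h\<close>, hence
  \<open>- exp (- l x) h (t + x)\<close> is an antiderivative of the integrand of the renewal equation below.\<close>

lemma tail_pgf_renewal_antiderivative:
  assumes u: "\<And>p. 0 \<le> u p" and tx: "t + x \<notin> grid u ` {..Q}"
  shows "((\<lambda>x. - (exp (- l * x) * tail_pgf l u w Q (t + x))) has_real_derivative
     l * exp (- x * l) * (cell_weight u w Q (t + x) * tail_pgf l u w Q (t + x))) (at x)"
proof -
  have "((\<lambda>x. weighted_excess u w Q (x + t)) has_real_derivative - (1 - cell_weight u w Q (t + x))) (at x)"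
    using DERIV_shift[THEN iffD1, OF weighted_excess_has_derivative[where u=u and s="x + t", OF u]] tx
    by (simp add: add.commute)
  then have d: "((\<lambda>x. weighted_excess u w Q (t + x)) has_real_derivative - (1 - cell_weight u w Q (t + x))) (at x)"
    by (simp add: add.commute)
  have "((\<lambda>x. - (exp (- l * x) * exp (- l * weighted_excess u w Q (t + x)))) has_real_derivative
     - (exp (- l * x) * (- l) * exp (- l * weighted_excess u w Q (t + x)) +
        (exp (- l * weighted_excess u w Q (t + x)) * (- l * - (1 - cell_weight u w Q (t + x)))) *
          exp (- l * x))) (at x)"
    by (intro DERIV_minus DERIV_mult DERIV_chain2[OF DERIV_exp] DERIV_cmult d)
       (auto intro!: derivative_eq_intros)
  then show ?thesis unfolding tail_pgf_def by (simp add: algebra_simps)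
qed

lemma tail_pgf_renewal_has_integral:
  assumes l: "0 < l" and u: "\<And>p. 0 \<le> u p"
  shows "((\<lambda>x. l * exp (- x * l) * (cell_weight u w Q (t + x) * tail_pgf l u w Q (t + x)))
           has_integral tail_pgf l u w Q t) {0..}"
proof -
  define f where "f x = l * exp (- x * l) * (cell_weight u w Q (t + x) * tail_pgf l u w Q (t + x))" for x
  define F where "F x = - (exp (- l * x) * tail_pgf l u w Q (t + x))" for x
  define B where "B = \<bar>grid u Q - t\<bar> + 1"
  have B: "0 < B" "grid u Q < t + B" unfolding B_def by auto
  have I1: "(f has_integral (F B - F 0)) {0..B}"
  proof (rule fundamental_theorem_of_calculus_interior_strong)
    show "finite ((\<lambda>s. s - t) ` grid u ` {..Q})" by simp
    show "continuous_on {0..B} F"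
      unfolding F_def
      by (intro continuous_intros continuous_on_compose2[OF continuous_on_tail_pgf]) auto
    fix x assume "x \<in> {0<..<B} - (\<lambda>s. s - t) ` grid u ` {..Q}"
    then have "t + x \<notin> grid u ` {..Q}" by force
    then show "(F has_vector_derivative f x) (at x)"
      unfolding F_def f_def has_real_derivative_iff_has_vector_derivative[symmetric]
      by (rule tail_pgf_renewal_antiderivative[where u=u, OF u])
  qed (use B in auto)
  have FB: "F B - F 0 = tail_pgf l u w Q t - exp (- l * B)"
    unfolding F_def using tail_pgf_beyond_grid[where u=u and Q=Q and s="t + B", OF u] B by simp
  have "f x = l * exp (- l * x)" if "x \<in> {B..}" for x
  proof -
    have "grid u Q < t + x" using that B by auto
    then show ?thesis
      unfolding f_def
      using cell_weight_beyond_grid[where u=u, OF u] tail_pgf_beyond_grid[where u=u and Q=Q and s="t + x", OF u]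
      by (simp add: mult.commute)
  qed
  moreover have "((\<lambda>x. l * exp (- l * x)) has_integral (l * (exp (- l * B) / l))) {B..}"
    by (rule has_integral_mult_right[OF has_integral_exp_minus_to_infinity[OF l]])
  ultimately have I2: "(f has_integral exp (- l * B)) {B..}"
    using l by (subst has_integral_cong) auto
  have "(f has_integral (F B - F 0 + exp (- l * B))) ({0..B} \<union> {B..})"
  proof (rule has_integral_Un[OF I1 I2])
    have "{0..B} \<inter> {B..} = {B}" using B by auto
    then show "negligible ({0..B} \<inter> {B..})" by simp
  qed
  moreover have "{0..B} \<union> {B..} = {0::real..}" using B by auto
  ultimately have "(f has_integral tail_pgf l u w Q t) {0..}" using FB by simp
  then show ?thesis unfolding f_def[abs_def] .
qed

text \<open>Conditioning on the first arrival: the renewal equation of the tail generating function.\<close>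

lemma tail_pgf_renewal:
  assumes l: "0 < l" and u: "\<And>p. 0 \<le> u p" and w0: "\<And>q. 0 \<le> w q"
  shows "(\<integral>\<^sup>+x. ennreal (cell_weight u w Q (t + x) * tail_pgf l u w Q (t + x))
            \<partial>density lborel (exponential_density l))
       = ennreal (tail_pgf l u w Q t)"
proof -
  have nonneg: "0 \<le> cell_weight u w Q (t + x) * tail_pgf l u w Q (t + x)" for x
    using cell_weight_nonneg[OF w0] tail_pgf_pos by (intro mult_nonneg_nonneg) (auto intro: less_imp_le)
  have "(\<integral>\<^sup>+x. ennreal (cell_weight u w Q (t + x) * tail_pgf l u w Q (t + x))
            \<partial>density lborel (exponential_density l))
     = (\<integral>\<^sup>+x. ennreal (l * exp (- x * l) * (cell_weight u w Q (t + x) * tail_pgf l u w Q (t + x))) *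
            indicator {0..} x \<partial>lborel)"
    using nonneg l
    by (subst nn_integral_density)
       (auto intro!: nn_integral_cong simp: exponential_density_def ennreal_mult[symmetric] indicator_def)
  also have "\<dots> = ennreal (tail_pgf l u w Q t)"
    by (rule nn_integral_has_integral_lebesgue'[OF _ tail_pgf_renewal_has_integral[OF l u]])
       (use l nonneg in auto)
  finally show ?thesis .
qed

lemma (in prob_space) nn_integral_sequence_space_split:
  assumes [measurable]: "f \<in> borel_measurable (PiM UNIV (\<lambda>_::nat. M))"
  shows "(\<integral>\<^sup>+X. f X \<partial>PiM UNIV (\<lambda>_::nat. M)) =
    (\<integral>\<^sup>+x. \<integral>\<^sup>+X. f (case_nat x X) \<partial>PiM UNIV (\<lambda>_::nat. M) \<partial>M)"
proof -
  interpret S: sequence_space M ..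
  interpret P: pair_sigma_finite M "\<Pi>\<^sub>M i::nat\<in>UNIV. M" ..
  have "(\<integral>\<^sup>+X. f X \<partial>S.S) = (\<integral>\<^sup>+X. f ((\<lambda>(s, \<omega>). case_nat s \<omega>) X) \<partial>(M \<Otimes>\<^sub>M S.S))"
    by (subst S.PiM_iter[symmetric]) (simp add: nn_integral_distr)
  also have "\<dots> = (\<integral>\<^sup>+x. \<integral>\<^sup>+X. f ((\<lambda>(s, \<omega>). case_nat s \<omega>) (x, X)) \<partial>S.S \<partial>M)"
    by (subst S.nn_integral_fst) simp_all
  finally show ?thesis by simp
qed

abbreviation Exp_dist :: "real \<Rightarrow> real measure" where
  "Exp_dist l \<equiv> density lborel (exponential_density l)"

abbreviation Exp_seq :: "real \<Rightarrow> (nat \<Rightarrow> real) measure" where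
  "Exp_seq l \<equiv> PiM UNIV (\<lambda>_::nat. Exp_dist l)"

text \<open>The first \<open>N\<close> arrivals (partial sums of \<open>x\<close>, starting at \<open>t\<close>) are weighted exactly,
  the later ones are replaced by their conditional expectation \<open>tail_pgf\<close>.\<close>

definition truncated_pgf ::
  "real \<Rightarrow> (nat \<Rightarrow> real) \<Rightarrow> (nat \<Rightarrow> real) \<Rightarrow> nat \<Rightarrow> nat \<Rightarrow> real \<Rightarrow> (nat \<Rightarrow> real) \<Rightarrow> real" where
  "truncated_pgf l u w Q N t x =
     (\<Prod>m<N. cell_weight u w Q (t + (\<Sum>i\<le>m. x i))) * tail_pgf l u w Q (t + (\<Sum>i<N. x i))"

lemma truncated_pgf_Suc:
  "truncated_pgf l u w Q (Suc N) t (case_nat s y) = cell_weight u w Q (t + s) * truncated_pgf l u w Q N (t + s) y"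
proof -
  have "(\<Sum>i\<le>Suc m. case_nat s y i) = s + (\<Sum>i\<le>m. y i)" for m
    by (subst sum.atMost_Suc_shift) simp
  moreover have "(\<Sum>i<Suc N. case_nat s y i) = s + (\<Sum>i<N. y i)"
    by (subst sum.lessThan_Suc_shift) simp
  ultimately show ?thesis unfolding truncated_pgf_def prod.lessThan_Suc_shift
    by (simp add: add.assoc)
qed

lemma truncated_pgf_measurable[measurable]:
  "(\<lambda>x. truncated_pgf l u w Q N t x) \<in> borel_measurable (Exp_seq l)"
  unfolding truncated_pgf_def by measurable

lemma truncated_pgf_nonneg: assumes "\<And>q. 0 \<le> w q" shows "0 \<le> truncated_pgf l u w Q N t x"
  unfolding truncated_pgf_def using cell_weight_nonneg[OF assms] less_imp_le[OF tail_pgf_pos]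
  by (intro mult_nonneg_nonneg prod_nonneg) auto

lemma truncated_pgf_le_1:
  assumes "0 \<le> l" "\<And>q. 0 \<le> w q" "\<And>q. w q \<le> 1" "\<And>p. 0 \<le> u p"
  shows "truncated_pgf l u w Q N t x \<le> 1"
  unfolding truncated_pgf_def
proof (rule mult_le_one)
  show "(\<Prod>m<N. cell_weight u w Q (t + sum x {..m})) \<le> 1"
    using cell_weight_nonneg[OF assms(2)] cell_weight_le_1[OF assms(2,3)] by (intro prod_le_1) auto
  show "0 \<le> tail_pgf l u w Q (t + sum x {..<N})" using less_imp_le[OF tail_pgf_pos] .
  show "tail_pgf l u w Q (t + sum x {..<N}) \<le> 1" using tail_pgf_le_1[OF assms(1,3,4)] .
qed

lemma nn_integral_truncated_pgf:
  assumes l: "0 < l" and u: "\<And>p. 0 \<le> u p" and w0: "\<And>q. 0 \<le> w q" and w1: "\<And>q. w q \<le> 1"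
  shows "(\<integral>\<^sup>+x. ennreal (truncated_pgf l u w Q N t x) \<partial>Exp_seq l) = ennreal (tail_pgf l u w Q t)"
proof (induction N arbitrary: t)
  interpret E: prob_space "Exp_dist l" using prob_space_exponential_density[OF l] .
  case 0
  interpret S: sequence_space "Exp_dist l" ..
  show ?case by (simp add: truncated_pgf_def S.emeasure_space_1)
next
  interpret E: prob_space "Exp_dist l" using prob_space_exponential_density[OF l] .
  case (Suc N)
  have "(\<integral>\<^sup>+x. ennreal (truncated_pgf l u w Q (Suc N) t x) \<partial>Exp_seq l)
      = (\<integral>\<^sup>+s. \<integral>\<^sup>+y. ennreal (truncated_pgf l u w Q (Suc N) t (case_nat s y)) \<partial>Exp_seq l \<partial>Exp_dist l)"
    by (rule E.nn_integral_sequence_space_split) measurable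
  also have "\<dots> = (\<integral>\<^sup>+s. ennreal (cell_weight u w Q (t + s)) *
      (\<integral>\<^sup>+y. ennreal (truncated_pgf l u w Q N (t + s) y) \<partial>Exp_seq l) \<partial>Exp_dist l)"
    unfolding truncated_pgf_Suc
    by (intro nn_integral_cong, subst nn_integral_cmult[symmetric])
       (auto simp: ennreal_mult cell_weight_nonneg[OF w0] truncated_pgf_nonneg[OF w0] intro!: nn_integral_cong)
  also have "\<dots> = (\<integral>\<^sup>+s. ennreal (cell_weight u w Q (t + s) * tail_pgf l u w Q (t + s)) \<partial>Exp_dist l)"
    unfolding Suc.IH
    by (intro nn_integral_cong) (auto simp: ennreal_mult cell_weight_nonneg[OF w0] less_imp_le[OF tail_pgf_pos])
  also have "\<dots> = ennreal (tail_pgf l u w Q t)"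
    by (rule tail_pgf_renewal[OF l u w0])
  finally show ?case .
qed

lemma nn_integral_Exp_exp_neg:
  assumes l: "0 < l"
  shows "(\<integral>\<^sup>+s. ennreal (exp (- s)) \<partial>Exp_dist l) = ennreal (l / (l + 1))"
proof -
  have I: "((\<lambda>x. l * exp (- (l + 1) * x)) has_integral (l * (exp (- (l + 1) * 0) / (l + 1)))) {0..}"
    by (rule has_integral_mult_right[OF has_integral_exp_minus_to_infinity]) (use l in simp)
  have "l * exp (- x * l) * exp (- x) = l * exp (- (l + 1) * x)" for x
    by (simp add: algebra_simps flip: exp_add)
  then have "(\<integral>\<^sup>+s. ennreal (exp (- s)) \<partial>Exp_dist l) =
      (\<integral>\<^sup>+x. ennreal (l * exp (- (l + 1) * x)) * indicator {0..} x \<partial>lborel)"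
    using l by (subst nn_integral_density)
      (auto intro!: nn_integral_cong simp: exponential_density_def ennreal_mult[symmetric] indicator_def)
  also have "\<dots> = ennreal (l * (exp (- (l + 1) * 0) / (l + 1)))"
    by (rule nn_integral_has_integral_lebesgue'[OF _ I]) (use l in auto)
  finally show ?thesis by simp
qed

lemma nn_integral_Exp_seq_exp_neg_sum:
  assumes l: "0 < l"
  shows "(\<integral>\<^sup>+x. ennreal (exp (- (\<Sum>i<N. x i))) \<partial>Exp_seq l) = ennreal ((l / (l + 1)) ^ N)"
proof (induction N)
  interpret E: prob_space "Exp_dist l" using prob_space_exponential_density[OF l] .
  case 0
  interpret S: sequence_space "Exp_dist l" ..
  show ?case by (simp add: S.emeasure_space_1)
next
  interpret E: prob_space "Exp_dist l" using prob_space_exponential_density[OF l] .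
  case (Suc N)
  have split: "ennreal (exp (- (\<Sum>i<Suc N. case_nat s y i))) = ennreal (exp (- s)) * ennreal (exp (- (\<Sum>i<N. y i)))"
    for s and y :: "nat \<Rightarrow> real"
  proof -
    have "(\<Sum>i<Suc N. case_nat s y i) = s + (\<Sum>i<N. y i)"
      by (subst sum.lessThan_Suc_shift) simp
    then show ?thesis by (simp add: ennreal_mult[symmetric] flip: exp_add)
  qed
  have "(\<integral>\<^sup>+x. ennreal (exp (- (\<Sum>i<Suc N. x i))) \<partial>Exp_seq l)
      = (\<integral>\<^sup>+s. \<integral>\<^sup>+y. ennreal (exp (- (\<Sum>i<Suc N. case_nat s y i))) \<partial>Exp_seq l \<partial>Exp_dist l)"
    by (rule E.nn_integral_sequence_space_split) measurable
  also have "\<dots> = (\<integral>\<^sup>+s. ennreal (exp (- s)) * (\<integral>\<^sup>+y. ennreal (exp (- (\<Sum>i<N. y i))) \<partial>Exp_seq l) \<partial>Exp_dist l)"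
    unfolding split by (intro nn_integral_cong) (subst nn_integral_cmult[symmetric]; simp)
  also have "\<dots> = ennreal ((l / (l + 1)) ^ Suc N)"
    unfolding Suc.IH using l
    by (subst nn_integral_multc) (simp_all add: nn_integral_Exp_exp_neg ennreal_mult[symmetric] mult.commute)
  finally show ?case .
qed

definition renewal_seq :: "(nat \<Rightarrow> real) \<Rightarrow> bool" where
  "renewal_seq x \<longleftrightarrow> (\<forall>i. 0 \<le> x i) \<and> (\<forall>h::nat. \<exists>N. real h < (\<Sum>i<N. x i))"

lemma renewal_seq_measurable[measurable]:
  assumes [measurable]: "f \<in> N \<rightarrow>\<^sub>M PiM UNIV (\<lambda>_::nat. borel)"
  shows "Measurable.pred N (\<lambda>y. renewal_seq (f y))"
  unfolding renewal_seq_def by measurable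

lemma AE_Exp_seq_nonneg:
  assumes l: "0 < l" shows "AE x in Exp_seq l. \<forall>i. 0 \<le> x i"
proof -
  have "AE s in Exp_dist l. 0 \<le> s"
    by (subst AE_density) (auto simp: exponential_density_def)
  then show ?thesis
    by (subst AE_all_countable) (auto intro!: AE_PiM_component prob_space_exponential_density[OF l])
qed

text \<open>By Markov's inequality applied to \<open>exp (- sum)\<close>, the partial sums stay below \<open>h\<close> up to
  \<open>N\<close> with probability at most \<open>exp h (l / (l + 1)) ^ N\<close>.\<close>

lemma AE_Exp_seq_unbounded:
  assumes l: "0 < l" shows "AE x in Exp_seq l. \<exists>N. h < (\<Sum>i<N. x i)"
proof -
  interpret E: prob_space "Exp_dist l" using prob_space_exponential_density[OF l] .
  interpret S: sequence_space "Exp_dist l" ..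
  define B where "B = {x \<in> space (Exp_seq l). \<forall>N. (\<Sum>i<N. x i) \<le> h}"
  have B_sets: "B \<in> sets (Exp_seq l)" unfolding B_def by measurable
  define r where "r = l / (l + 1)"
  have r: "0 \<le> r" "r < 1" unfolding r_def using l by auto
  have bound: "measure (Exp_seq l) B \<le> exp h * r ^ N" for N
  proof -
    have "emeasure (Exp_seq l) B \<le> emeasure (Exp_seq l) {x \<in> space (Exp_seq l). (\<Sum>i<N. x i) \<le> h}"
      by (rule emeasure_mono) (auto simp: B_def)
    also have "\<dots> = (\<integral>\<^sup>+x. indicator {x \<in> space (Exp_seq l). (\<Sum>i<N. x i) \<le> h} x \<partial>Exp_seq l)"
      by (rule nn_integral_indicator[symmetric]) measurable
    also have "\<dots> \<le> (\<integral>\<^sup>+x. ennreal (exp h) * ennreal (exp (- (\<Sum>i<N. x i))) \<partial>Exp_seq l)"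
    proof (intro nn_integral_mono)
      fix x
      have "(\<Sum>i<N. x i) \<le> h \<Longrightarrow> 1 \<le> exp h * exp (- (\<Sum>i<N. x i))" by (simp flip: exp_add)
      then show "indicator {x \<in> space (Exp_seq l). (\<Sum>i<N. x i) \<le> h} x
          \<le> ennreal (exp h) * ennreal (exp (- (\<Sum>i<N. x i)))"
        by (auto simp: indicator_def ennreal_mult[symmetric])
    qed
    also have "\<dots> = ennreal (exp h * r ^ N)"
      using r by (subst nn_integral_cmult) (auto simp: nn_integral_Exp_seq_exp_neg_sum[OF l] r_def ennreal_mult)
    finally show ?thesis
      using r by (simp add: S.emeasure_eq_measure ennreal_le_iff)
  qed
  have "(\<lambda>N. exp h * r ^ N) \<longlonglongrightarrow> exp h * 0"
    by (intro tendsto_mult tendsto_const LIMSEQ_power_zero) (use r in auto)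
  then have "measure (Exp_seq l) B \<le> 0"
    by (intro LIMSEQ_le_const[of "\<lambda>N. exp h * r ^ N"]) (use bound in auto)
  then have "emeasure (Exp_seq l) B = 0"
    by (simp add: S.emeasure_eq_measure measure_nonneg antisym)
  then show ?thesis
    by (intro AE_I[OF _ _ B_sets]) (auto simp: B_def not_less)
qed

lemma AE_Exp_seq_renewal_seq:
  assumes l: "0 < l" shows "AE x in Exp_seq l. renewal_seq x"
proof -
  have "AE x in Exp_seq l. \<forall>h::nat. \<exists>N. real h < (\<Sum>i<N. x i)"
    by (subst AE_all_countable) (auto intro: AE_Exp_seq_unbounded[OF l])
  with AE_Exp_seq_nonneg[OF l] show ?thesis
    by eventually_elim (auto simp: renewal_seq_def)
qed

lemma renewal_seq_beyond:
  assumes x: "renewal_seq x" obtains N where "\<And>m. N \<le> m \<Longrightarrow> b < (\<Sum>i<m. x i)"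
proof -
  obtain N where N: "real (nat \<lceil>b\<rceil>) < (\<Sum>i<N. x i)" using x unfolding renewal_seq_def by blast
  have "b < (\<Sum>i<m. x i)" if "N \<le> m" for m
  proof -
    have "(\<Sum>i<N. x i) \<le> (\<Sum>i<m. x i)" using x that unfolding renewal_seq_def by (intro sum_mono2) auto
    then show ?thesis using N by linarith
  qed
  then show ?thesis using that by blast
qed

definition renewal_count :: "(nat \<Rightarrow> real) \<Rightarrow> real \<Rightarrow> real \<Rightarrow> nat" where
  "renewal_count x a b = card {m. a < (\<Sum>i\<le>m. x i) \<and> (\<Sum>i\<le>m. x i) \<le> b}"

lemma renewal_count_measurable[measurable]:
  assumes [measurable]: "f \<in> N \<rightarrow>\<^sub>M PiM UNIV (\<lambda>_::nat. borel)" "a \<in> borel_measurable N" "b \<in> borel_measurable N"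
  shows "(\<lambda>y. renewal_count (f y) (a y) (b y)) \<in> N \<rightarrow>\<^sub>M count_space UNIV"
  unfolding renewal_count_def by measurable

lemma renewal_seq_finite:
  assumes x: "renewal_seq x" shows "finite {m. a < (\<Sum>i\<le>m. x i) \<and> (\<Sum>i\<le>m. x i) \<le> b}"
proof -
  obtain N where N: "\<And>m. N \<le> m \<Longrightarrow> b < (\<Sum>i<m. x i)" using renewal_seq_beyond[OF x] by blast
  have "m < N" if "(\<Sum>i\<le>m. x i) \<le> b" for m
  proof (rule ccontr)
    assume "\<not> m < N"
    then have "b < (\<Sum>i<Suc m. x i)" by (intro N) simp
    then show False using that by (simp add: lessThan_Suc_atMost)
  qed
  then have "{m. a < (\<Sum>i\<le>m. x i) \<and> (\<Sum>i\<le>m. x i) \<le> b} \<subseteq> {..<N}" by auto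
  then show ?thesis by (rule finite_subset) simp
qed

lemma renewal_count_split:
  assumes g: "renewal_seq x" and ab: "a \<le> b" and bc: "b \<le> c"
  shows "renewal_count x a c = renewal_count x a b + renewal_count x b c"
proof -
  have "{m. a < (\<Sum>i\<le>m. x i) \<and> (\<Sum>i\<le>m. x i) \<le> c} =
     {m. a < (\<Sum>i\<le>m. x i) \<and> (\<Sum>i\<le>m. x i) \<le> b} \<union> {m. b < (\<Sum>i\<le>m. x i) \<and> (\<Sum>i\<le>m. x i) \<le> c}"
    using ab bc by auto
  then show ?thesis unfolding renewal_count_def
    by (simp add: card_Un_disjoint[OF renewal_seq_finite[OF g] renewal_seq_finite[OF g]] disjoint_iff)
qed

lemma renewal_count_grid:
  assumes x: "renewal_seq x" and u: "\<And>p. 0 \<le> u p"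
  shows "renewal_count x 0 (grid u N) = (\<Sum>q<N. renewal_count x (grid u q) (grid u (Suc q)))"
proof (induction N)
  case 0
  have empty: "{m. 0 < (\<Sum>i\<le>m. x i) \<and> (\<Sum>i\<le>m. x i) \<le> 0} = {}" by auto
  have zero: "grid u 0 = 0" by (simp add: grid_def)
  show ?case unfolding renewal_count_def zero empty by simp
next
  case (Suc N)
  then show ?case
    using renewal_count_split[OF x grid_nonneg[where u=u, OF u] grid_mono[where u=u, OF u, of N "Suc N"]]
    by simp
qed

lemma renewal_count_pgf_measurable[measurable]:
  fixes w :: "nat \<Rightarrow> real"
  assumes [measurable]: "f \<in> N \<rightarrow>\<^sub>M PiM UNIV (\<lambda>_::nat. borel)"
  shows "(\<lambda>y. \<Prod>q<Q. w q ^ renewal_count (f y) (grid u q) (grid u (Suc q))) \<in> borel_measurable N"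
proof (rule borel_measurable_prod)
  fix q
  have "(\<lambda>y. renewal_count (f y) (grid u q) (grid u (Suc q))) \<in> N \<rightarrow>\<^sub>M count_space UNIV" by measurable
  then show "(\<lambda>y. w q ^ renewal_count (f y) (grid u q) (grid u (Suc q))) \<in> borel_measurable N"
    by (rule measurable_compose) simp
qed

lemma prod_if_eq_power_card:
  assumes "finite A" shows "(\<Prod>m\<in>A. if P m then c else 1) = c ^ card {m\<in>A. P m}"
  using prod.inter_filter[OF assms, of "\<lambda>_. c" P] by simp

lemma truncated_pgf_eventually_exact:
  assumes x: "renewal_seq x" and u: "\<And>p. 0 \<le> u p"
  shows "eventually (\<lambda>N. truncated_pgf l u w Q N 0 x =
           (\<Prod>q<Q. w q ^ renewal_count x (grid u q) (grid u (Suc q)))) sequentially"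
proof -
  obtain N0 where N0: "\<And>m. N0 \<le> m \<Longrightarrow> grid u Q < (\<Sum>i<m. x i)"
    using renewal_seq_beyond[OF x] by blast
  have x0: "\<And>i. 0 \<le> x i" using x by (simp add: renewal_seq_def)
  have late: "grid u Q < (\<Sum>i\<le>m. x i)" if "N0 \<le> m" for m
    using N0[of "Suc m"] that by (simp add: lessThan_Suc_atMost)
  have "truncated_pgf l u w Q N 0 x = (\<Prod>q<Q. w q ^ renewal_count x (grid u q) (grid u (Suc q)))"
    if N: "N0 \<le> N" for N
  proof -
    have "(\<Prod>m<N. cell_weight u w Q (\<Sum>i\<le>m. x i))
        = (\<Prod>q<Q. \<Prod>m<N. if grid u q < (\<Sum>i\<le>m. x i) \<and> (\<Sum>i\<le>m. x i) \<le> grid u (Suc q) then w q else 1)"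
      unfolding cell_weight_def by (rule prod.swap)
    also have "\<dots> = (\<Prod>q<Q. w q ^ renewal_count x (grid u q) (grid u (Suc q)))"
    proof (intro prod.cong refl)
      fix q assume "q \<in> {..<Q}"
      then have "grid u (Suc q) \<le> grid u Q" using grid_mono[where u=u, OF u] by auto
      then have "m < N" if "(\<Sum>i\<le>m. x i) \<le> grid u (Suc q)" for m
        using late[of m] N that by (cases "N \<le> m") auto
      then have "{m\<in>{..<N}. grid u q < (\<Sum>i\<le>m. x i) \<and> (\<Sum>i\<le>m. x i) \<le> grid u (Suc q)}
          = {m. grid u q < (\<Sum>i\<le>m. x i) \<and> (\<Sum>i\<le>m. x i) \<le> grid u (Suc q)}"
        by auto
      then show "(\<Prod>m<N. if grid u q < (\<Sum>i\<le>m. x i) \<and> (\<Sum>i\<le>m. x i) \<le> grid u (Suc q) then w q else 1)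
          = w q ^ renewal_count x (grid u q) (grid u (Suc q))"
        unfolding prod_if_eq_power_card[OF finite_lessThan] renewal_count_def by simp
    qed
    finally show ?thesis
      unfolding truncated_pgf_def using tail_pgf_beyond_grid[where u=u, OF u] N0[OF N] by simp
  qed
  then show ?thesis by (rule eventually_sequentiallyI)
qed

lemma nn_integral_Exp_seq_renewal_count_pgf:
  assumes l: "0 < l" and u: "\<And>p. 0 \<le> u p" and w0: "\<And>q. 0 \<le> w q" and w1: "\<And>q. w q \<le> 1"
  shows "(\<integral>\<^sup>+x. ennreal (\<Prod>q<Q. w q ^ renewal_count x (grid u q) (grid u (Suc q))) \<partial>Exp_seq l)
       = ennreal (exp (- l * (\<Sum>q<Q. (1 - w q) * u q)))"
proof -
  interpret E: prob_space "Exp_dist l" using prob_space_exponential_density[OF l] .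
  interpret S: sequence_space "Exp_dist l" ..
  define \<Phi> where "\<Phi> x = (\<Prod>q<Q. w q ^ renewal_count x (grid u q) (grid u (Suc q)))" for x
  have \<Phi>_meas: "\<Phi> \<in> borel_measurable (Exp_seq l)"
    unfolding \<Phi>_def
    by (rule renewal_count_pgf_measurable[OF measurable_ident_sets]) (intro sets_PiM_cong; simp)
  have \<Phi>_bounds: "0 \<le> \<Phi> x" "\<Phi> x \<le> 1" for x
    unfolding \<Phi>_def using w0 w1 by (auto intro!: prod_nonneg prod_le_1 power_le_one)
  have int_truncated: "(\<integral>x. truncated_pgf l u w Q N 0 x \<partial>Exp_seq l) = tail_pgf l u w Q 0" for N
    using nn_integral_truncated_pgf[where Q=Q and N=N and t=0, OF l u w0 w1] less_imp_le[OF tail_pgf_pos]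
    by (subst integral_eq_nn_integral) (auto simp: truncated_pgf_nonneg[OF w0])
  have "(\<lambda>N. \<integral>x. truncated_pgf l u w Q N 0 x \<partial>Exp_seq l) \<longlonglongrightarrow> (\<integral>x. \<Phi> x \<partial>Exp_seq l)"
  proof (rule integral_dominated_convergence[where w="\<lambda>_. 1"])
    show "AE x in Exp_seq l. (\<lambda>N. truncated_pgf l u w Q N 0 x) \<longlonglongrightarrow> \<Phi> x"
      using AE_Exp_seq_renewal_seq[OF l]
      by eventually_elim (unfold \<Phi>_def, rule tendsto_eventually, rule truncated_pgf_eventually_exact[OF _ u])
    show "AE x in Exp_seq l. norm (truncated_pgf l u w Q N 0 x) \<le> 1" for N
      using truncated_pgf_nonneg[OF w0] truncated_pgf_le_1[OF less_imp_le[OF l] w0 w1 u] by auto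
  qed (use \<Phi>_meas in auto)
  then have "(\<integral>x. \<Phi> x \<partial>Exp_seq l) = tail_pgf l u w Q 0"
    unfolding int_truncated using LIMSEQ_unique tendsto_const by blast
  moreover have "(\<integral>\<^sup>+x. ennreal (\<Phi> x) \<partial>Exp_seq l) = ennreal (\<integral>x. \<Phi> x \<partial>Exp_seq l)"
    using \<Phi>_bounds \<Phi>_meas
    by (intro nn_integral_eq_integral S.integrable_const_bound[where B=1]) auto
  ultimately show ?thesis unfolding \<Phi>_def tail_pgf_def weighted_excess_0[where u=u, OF u] by simp
qed

section \<open>Independent arrival classes\<close>

lemma (in prob_space) indep_vars_sequences:
  assumes ind: "indep_vars (\<lambda>_. borel) X I"
    and K: "\<And>j. j \<in> J \<Longrightarrow> range (g j) \<subseteq> I"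
    and disj: "\<And>j j' m m'. j \<in> J \<Longrightarrow> j' \<in> J \<Longrightarrow> g j m = g j' m' \<Longrightarrow> j = j'"
  shows "indep_vars (\<lambda>j. PiM UNIV (\<lambda>_::nat. borel)) (\<lambda>j \<omega>. (\<lambda>m. X (g j m) \<omega>)) J"
proof -
  have df: "disjoint_family_on (\<lambda>j. range (g j)) J"
    unfolding disjoint_family_on_def using disj by blast
  have i1: "indep_vars (\<lambda>j. PiM (range (g j)) (\<lambda>_. borel)) (\<lambda>j \<omega>. restrict (\<lambda>i. X i \<omega>) (range (g j))) J"
    by (rule indep_vars_restrict[OF ind K df])
  have meas: "(\<lambda>v. \<lambda>m. v (g j m)) \<in> PiM (range (g j)) (\<lambda>_. borel) \<rightarrow>\<^sub>M PiM UNIV (\<lambda>_::nat. borel)" for j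
    by (rule measurable_PiM_single') (auto intro!: measurable_component_singleton)
  have i2: "indep_vars (\<lambda>j. PiM UNIV (\<lambda>_::nat. borel))
     (\<lambda>j \<omega>. (\<lambda>v. \<lambda>m. v (g j m)) (restrict (\<lambda>i. X i \<omega>) (range (g j)))) J"
    by (rule indep_vars_compose2[OF i1 meas])
  show ?thesis
    by (rule indep_vars_cong[THEN iffD1, OF refl _ refl i2]) (auto simp: fun_eq_iff)
qed

lemma (in prob_space) indep_vars_reindex:
  assumes ind: "indep_vars (\<lambda>_. borel) X I"
    and K: "\<And>j. j \<in> J \<Longrightarrow> g j \<in> I" and inj: "inj_on g J"
  shows "indep_vars (\<lambda>j. borel) (\<lambda>j. X (g j)) J"
proof -
  have df: "disjoint_family_on (\<lambda>j. {g j}) J"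
    unfolding disjoint_family_on_def using inj by (auto dest: inj_onD)
  have i1: "indep_vars (\<lambda>j. PiM {g j} (\<lambda>_. borel)) (\<lambda>j \<omega>. restrict (\<lambda>i. X i \<omega>) {g j}) J"
    by (rule indep_vars_restrict[OF ind _ df]) (use K in auto)
  have meas: "(\<lambda>v. v (g j)) \<in> PiM {g j} (\<lambda>_. borel) \<rightarrow>\<^sub>M borel" for j
    by (rule measurable_component_singleton) auto
  have i2: "indep_vars (\<lambda>j. borel) (\<lambda>j \<omega>. (\<lambda>v. v (g j)) (restrict (\<lambda>i. X i \<omega>) {g j})) J"
    by (rule indep_vars_compose2[OF i1 meas])
  show ?thesis
    by (rule indep_vars_cong[THEN iffD1, OF refl _ refl i2]) (auto simp: fun_eq_iff)
qed

lemma (in prob_space) distr_sequence_eq_Exp_seq: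
  assumes ind: "indep_vars (\<lambda>_. borel) X I" and K: "\<And>m. g m \<in> I" and inj: "inj g"
    and dist: "\<And>m. distributed M lborel (X (g m)) (exponential_density l)"
  shows "distr M (PiM UNIV (\<lambda>_::nat. borel)) (\<lambda>\<omega> m. X (g m) \<omega>) = Exp_seq l"
proof -
  have rv: "random_variable borel (X (g m))" for m
    using dist[of m] by (auto simp: distributed_def)
  have i: "indep_vars (\<lambda>j. borel) (\<lambda>j. X (g j)) UNIV"
    by (rule indep_vars_reindex[OF ind]) (use K inj in auto)
  have "distr M (PiM UNIV (\<lambda>_::nat. borel)) (\<lambda>\<omega>. \<lambda>m\<in>UNIV. X (g m) \<omega>) = PiM UNIV (\<lambda>m. distr M borel (X (g m)))"
    using indep_vars_iff_distr_eq_PiM[where I=UNIV and M'="\<lambda>_. borel" and X="\<lambda>m. X (g m)"] i rv by simp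
  moreover have "distr M borel (X (g m)) = Exp_dist l" for m
  proof -
    have "distr M borel (X (g m)) = distr M lborel (X (g m))" by (rule distr_cong) auto
    then show ?thesis using dist[of m] by (simp add: distributed_def)
  qed
  ultimately show ?thesis by (simp add: restrict_UNIV)
qed

lemma (in prob_space) nn_integral_renewal_count_pgf:
  assumes ind: "indep_vars (\<lambda>_. borel) X I" and K: "\<And>m. g m \<in> I" and inj: "inj g"
    and dist: "\<And>m. distributed M lborel (X (g m)) (exponential_density l)"
    and l: "0 < l" and u: "\<And>p. 0 \<le> u p" and w0: "\<And>q. 0 \<le> w q" and w1: "\<And>q. w q \<le> 1"
  shows "(\<integral>\<^sup>+\<omega>. ennreal (\<Prod>q<Q. w q ^ renewal_count (\<lambda>m. X (g m) \<omega>) (grid u q) (grid u (Suc q))) \<partial>M)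
       = ennreal (exp (- l * (\<Sum>q<Q. (1 - w q) * u q)))"
proof -
  have rv: "(\<lambda>\<omega> m. X (g m) \<omega>) \<in> M \<rightarrow>\<^sub>M PiM UNIV (\<lambda>_::nat. borel)"
    using dist by (intro measurable_PiM_single') (auto simp: distributed_def)
  have "(\<integral>\<^sup>+\<omega>. ennreal (\<Prod>q<Q. w q ^ renewal_count (\<lambda>m. X (g m) \<omega>) (grid u q) (grid u (Suc q))) \<partial>M)
     = (\<integral>\<^sup>+x. ennreal (\<Prod>q<Q. w q ^ renewal_count x (grid u q) (grid u (Suc q)))
          \<partial>distr M (PiM UNIV (\<lambda>_::nat. borel)) (\<lambda>\<omega> m. X (g m) \<omega>))"
    by (subst nn_integral_distr[OF rv]) (auto intro!: measurable_compose[OF _ measurable_ennreal])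
  also have "\<dots> = (\<integral>\<^sup>+x. ennreal (\<Prod>q<Q. w q ^ renewal_count x (grid u q) (grid u (Suc q))) \<partial>Exp_seq l)"
    unfolding distr_sequence_eq_Exp_seq[OF ind K inj dist] ..
  also have "\<dots> = ennreal (exp (- l * (\<Sum>q<Q. (1 - w q) * u q)))"
    by (rule nn_integral_Exp_seq_renewal_count_pgf[OF l u w0 w1])
  finally show ?thesis .
qed

lemma (in prob_space) nn_integral_renewal_count_pgf_classes:
  fixes w :: "nat \<Rightarrow> nat \<Rightarrow> real" and g :: "nat \<Rightarrow> nat \<Rightarrow> 'i"
  assumes ind: "indep_vars (\<lambda>_. borel) X I" and fin: "finite Cl"
    and K: "\<And>i m. i \<in> Cl \<Longrightarrow> g i m \<in> I" and inj: "\<And>i. i \<in> Cl \<Longrightarrow> inj (g i)"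
    and disj: "\<And>i i' m m'. i \<in> Cl \<Longrightarrow> i' \<in> Cl \<Longrightarrow> g i m = g i' m' \<Longrightarrow> i = i'"
    and dist: "\<And>i m. i \<in> Cl \<Longrightarrow> distributed M lborel (X (g i m)) (exponential_density (lam i))"
    and lam: "\<And>i. i \<in> Cl \<Longrightarrow> 0 < lam i" and u: "\<And>p. 0 \<le> u p"
    and w: "\<And>i q. i \<in> Cl \<Longrightarrow> 0 \<le> w i q \<and> w i q \<le> 1"
  shows "(\<integral>\<^sup>+\<omega>. ennreal (\<Prod>i\<in>Cl. \<Prod>q<Q. w i q ^ renewal_count (\<lambda>m. X (g i m) \<omega>) (grid u q) (grid u (Suc q))) \<partial>M)
       = ennreal (\<Prod>i\<in>Cl. exp (- lam i * (\<Sum>q<Q. (1 - w i q) * u q)))"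
proof -
  have ib: "indep_vars (\<lambda>i. PiM UNIV (\<lambda>_::nat. borel)) (\<lambda>i \<omega> m. X (g i m) \<omega>) Cl"
    by (rule indep_vars_sequences[OF ind]) (use K disj in auto)
  let ?pgf = "\<lambda>i x. ennreal (\<Prod>q<Q. w i q ^ renewal_count x (grid u q) (grid u (Suc q)))"
  have ie: "indep_vars (\<lambda>_. borel) (\<lambda>i \<omega>. ?pgf i (\<lambda>m. X (g i m) \<omega>)) Cl"
  proof (rule indep_vars_compose2[OF ib])
    fix i
    have "(\<lambda>x. \<Prod>q<Q. w i q ^ renewal_count x (grid u q) (grid u (Suc q)))
        \<in> borel_measurable (PiM UNIV (\<lambda>_::nat. borel))"
      by (rule renewal_count_pgf_measurable[OF measurable_ident_sets]) simp
    then show "?pgf i \<in> borel_measurable (PiM UNIV (\<lambda>_::nat. borel))"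
      by (rule measurable_compose[OF _ measurable_ennreal])
  qed
  have nn: "0 \<le> (\<Prod>q<Q. w i q ^ renewal_count x (grid u q) (grid u (Suc q)))" if "i \<in> Cl" for i x
    using w[OF that] by (intro prod_nonneg) auto
  have "(\<integral>\<^sup>+\<omega>. ennreal (\<Prod>i\<in>Cl. \<Prod>q<Q. w i q ^ renewal_count (\<lambda>m. X (g i m) \<omega>) (grid u q) (grid u (Suc q))) \<partial>M)
     = (\<integral>\<^sup>+\<omega>. (\<Prod>i\<in>Cl. ennreal (\<Prod>q<Q. w i q ^ renewal_count (\<lambda>m. X (g i m) \<omega>) (grid u q) (grid u (Suc q)))) \<partial>M)"
    by (intro nn_integral_cong) (simp add: prod_ennreal nn)
  also have "\<dots> = (\<Prod>i\<in>Cl. \<integral>\<^sup>+\<omega>. ?pgf i (\<lambda>m. X (g i m) \<omega>) \<partial>M)"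
    by (rule indep_vars_nn_integral[OF fin ie]) simp
  also have "\<dots> = (\<Prod>i\<in>Cl. ennreal (exp (- lam i * (\<Sum>q<Q. (1 - w i q) * u q))))"
  proof (rule prod.cong[OF refl])
    fix i assume i: "i \<in> Cl"
    show "(\<integral>\<^sup>+\<omega>. ennreal (\<Prod>q<Q. w i q ^ renewal_count (\<lambda>m. X (g i m) \<omega>) (grid u q) (grid u (Suc q))) \<partial>M)
       = ennreal (exp (- lam i * (\<Sum>q<Q. (1 - w i q) * u q)))"
      by (rule nn_integral_renewal_count_pgf[OF ind _ inj[OF i] dist[OF i] lam[OF i] u]) (use K i w in auto)
  qed
  also have "\<dots> = ennreal (\<Prod>i\<in>Cl. exp (- lam i * (\<Sum>q<Q. (1 - w i q) * u q)))"
    by (simp add: prod_ennreal)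
  finally show ?thesis .
qed

lemma (in prob_space) nn_integral_indep_var_iterated:
  assumes ind: "indep_var S X T Y" and f[measurable]: "f \<in> borel_measurable (S \<Otimes>\<^sub>M T)"
  shows "(\<integral>\<^sup>+\<omega>. f (X \<omega>, Y \<omega>) \<partial>M) = (\<integral>\<^sup>+\<omega>. (\<integral>\<^sup>+\<omega>'. f (X \<omega>, Y \<omega>') \<partial>M) \<partial>M)"
proof -
  have rvX[measurable]: "X \<in> M \<rightarrow>\<^sub>M S" and rvY[measurable]: "Y \<in> M \<rightarrow>\<^sub>M T"
    and eq: "distr M S X \<Otimes>\<^sub>M distr M T Y = distr M (S \<Otimes>\<^sub>M T) (\<lambda>x. (X x, Y x))"
    using ind unfolding indep_var_distribution_eq by auto
  interpret PX: prob_space "distr M S X" by (rule prob_space_distr[OF rvX])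
  interpret PY: prob_space "distr M T Y" by (rule prob_space_distr[OF rvY])
  interpret P: pair_sigma_finite "distr M S X" "distr M T Y" ..
  have sets_eq: "sets (distr M S X \<Otimes>\<^sub>M distr M T Y) = sets (S \<Otimes>\<^sub>M T)"
    by (intro sets_pair_measure_cong) auto
  have f': "f \<in> borel_measurable (distr M S X \<Otimes>\<^sub>M distr M T Y)"
    using f by (simp add: measurable_cong_sets[OF sets_eq refl])
  have "(\<integral>\<^sup>+\<omega>. f (X \<omega>, Y \<omega>) \<partial>M) = (\<integral>\<^sup>+p. f p \<partial>distr M (S \<Otimes>\<^sub>M T) (\<lambda>x. (X x, Y x)))"
    by (subst nn_integral_distr) auto
  also have "\<dots> = (\<integral>\<^sup>+x. \<integral>\<^sup>+y. f (x, y) \<partial>distr M T Y \<partial>distr M S X)"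
    unfolding eq[symmetric] using PY.nn_integral_fst[OF f'] by simp
  also have "\<dots> = (\<integral>\<^sup>+\<omega>. \<integral>\<^sup>+y. f (X \<omega>, y) \<partial>distr M T Y \<partial>M)"
    by (rule nn_integral_distr[OF rvX PY.borel_measurable_nn_integral_fst[OF f']])
  also have "\<dots> = (\<integral>\<^sup>+\<omega>. \<integral>\<^sup>+\<omega>'. f (X \<omega>, Y \<omega>') \<partial>M \<partial>M)"
  proof (intro nn_integral_cong)
    fix \<omega> assume "\<omega> \<in> space M"
    then have "X \<omega> \<in> space S" using rvX by (auto simp: measurable_def)
    then have "(\<lambda>y. f (X \<omega>, y)) \<in> borel_measurable T" using measurable_Pair2[OF f] by blast
    then show "(\<integral>\<^sup>+y. f (X \<omega>, y) \<partial>distr M T Y) = (\<integral>\<^sup>+\<omega>'. f (X \<omega>, Y \<omega>') \<partial>M)"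
      by (subst nn_integral_distr[OF rvY]) auto
  qed
  finally show ?thesis .
qed

lemma (in prob_space) integral_prod_indep_vars_bounded:
  fixes f :: "'i \<Rightarrow> real \<Rightarrow> real"
  assumes ind: "indep_vars (\<lambda>_. borel) X J" and fin: "finite J"
    and f: "\<And>s. s \<in> J \<Longrightarrow> f s \<in> borel_measurable borel"
    and bound: "\<And>s. s \<in> J \<Longrightarrow> AE \<omega> in M. \<bar>f s (X s \<omega>)\<bar> \<le> 1"
  shows "(\<integral>\<omega>. (\<Prod>s\<in>J. f s (X s \<omega>)) \<partial>M) = (\<Prod>s\<in>J. \<integral>\<omega>. f s (X s \<omega>) \<partial>M)"
proof (rule indep_vars_lebesgue_integral[OF fin])
  show "indep_vars (\<lambda>_. borel) (\<lambda>s \<omega>. f s (X s \<omega>)) J"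
    by (rule indep_vars_compose2[OF ind f])
  fix s assume s: "s \<in> J"
  have "X s \<in> borel_measurable M" using ind s by (auto simp: indep_vars_def)
  then show "integrable M (\<lambda>\<omega>. f s (X s \<omega>))"
    by (intro integrable_const_bound[where B=1] measurable_compose[OF _ f[OF s]]) (use bound[OF s] in auto)
qed

section \<open>The chain with deterministic overhead lengths\<close>

text \<open>With pause lengths \<open>c\<close> and resume lengths \<open>d\<close>, the chain time axis is the grid of
  \<open>interleave c d\<close>: cell \<open>2 l\<close> is the \<open>l\<close>-th pause, cell \<open>2 l + 1\<close> the \<open>l\<close>-th resume.\<close>

definition interleave :: "(nat \<Rightarrow> real) \<Rightarrow> (nat \<Rightarrow> real) \<Rightarrow> nat \<Rightarrow> real" where
  "interleave c d p = (if even p then c (p div 2) else d (p div 2))"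

lemma interleave_nonneg: "(\<And>l. 0 \<le> c l) \<Longrightarrow> (\<And>l. 0 \<le> d l) \<Longrightarrow> 0 \<le> interleave c d p"
  by (simp add: interleave_def)

lemma grid_interleave_even: "grid (interleave c d) (2 * l) = (\<Sum>p<l. c p + d p)"
  by (induction l) (simp_all add: grid_def interleave_def)

lemma grid_interleave_odd: "grid (interleave c d) (Suc (2 * l)) = (\<Sum>p<l. c p + d p) + c l"
  unfolding grid_Suc grid_interleave_even by (simp add: interleave_def)

lemma grid_interleave_Suc_odd: "grid (interleave c d) (Suc (Suc (2 * l))) = (\<Sum>p<l. c p + d p) + c l + d l"
  unfolding grid_Suc[of _ "Suc _"] grid_interleave_odd by (simp add: interleave_def)

lemma round_start_const: "round_start (\<lambda>l _. c l) (\<lambda>l _. d l) j \<omega> = (\<Sum>p<j. c p + d p)"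
  by (simp add: round_start_def)

lemma arr_count_eq_renewal_count: "arr_count A i a b \<omega> = renewal_count (\<lambda>m. A i m \<omega>) a b"
  by (simp add: arr_count_def renewal_count_def arr_time_def)

lemma resume_fails_iff_renewal_count:
  "resume_fails k A (\<lambda>l _. c l) (\<lambda>l _. d l) a \<omega> \<longleftrightarrow>
    (\<exists>i\<in>{1..<k}. 0 < renewal_count (\<lambda>m. A i m \<omega>)
                      (grid (interleave c d) (Suc (2 * a))) (grid (interleave c d) (Suc (Suc (2 * a)))))"
  unfolding resume_fails_def round_start_const arr_count_eq_renewal_count
    grid_interleave_odd grid_interleave_Suc_odd ..

text \<open>\<open>weighted_arrivals \<dots> E\<close> is \<open>\<Prod>i. z i ^ N\<^sub>i\<close> over the rounds \<open>0..j\<close>, times the indicator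
  that the resumes of the rounds in \<open>E\<close> succeed: \<open>pgf_arg\<close> replaces \<open>z i\<close> by 0 for the
  classes \<open>i < k\<close> on these resume cells.\<close>

definition pgf_arg :: "nat \<Rightarrow> (nat \<Rightarrow> real) \<Rightarrow> nat set \<Rightarrow> nat \<Rightarrow> nat \<Rightarrow> real" where
  "pgf_arg k z E i q = (if odd q \<and> q div 2 \<in> E \<and> i < k then 0 else z i)"

definition weighted_arrivals ::
  "nat \<Rightarrow> nat \<Rightarrow> (nat \<Rightarrow> nat \<Rightarrow> 'a \<Rightarrow> real) \<Rightarrow> (nat \<Rightarrow> real) \<Rightarrow> (nat \<Rightarrow> real) \<Rightarrow> (nat \<Rightarrow> real)
    \<Rightarrow> nat \<Rightarrow> nat set \<Rightarrow> 'a \<Rightarrow> real" where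
  "weighted_arrivals n k A c d z j E \<omega> =
     (\<Prod>i\<in>{1..n}. \<Prod>q<2 * Suc j. pgf_arg k z E i q ^
        renewal_count (\<lambda>m. A i m \<omega>) (grid (interleave c d) q) (grid (interleave c d) (Suc q)))"

definition fails_ind ::
  "nat \<Rightarrow> (nat \<Rightarrow> nat \<Rightarrow> 'a \<Rightarrow> real) \<Rightarrow> (nat \<Rightarrow> real) \<Rightarrow> (nat \<Rightarrow> real) \<Rightarrow> nat \<Rightarrow> 'a \<Rightarrow> real" where
  "fails_ind k A c d l \<omega> = (if resume_fails k A (\<lambda>l _. c l) (\<lambda>l _. d l) l \<omega> then 1 else 0)"

lemma prod_zero_power: "finite S \<Longrightarrow> (\<Prod>i\<in>S. (0::real) ^ f i) = (if \<forall>i\<in>S. f i = 0 then 1 else 0)"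
  by (induction S rule: finite_induct) auto

lemma weighted_arrivals_insert:
  assumes a: "a \<notin> E" "a \<le> j" and kn: "k \<le> Suc n"
  shows "weighted_arrivals n k A c d z j (insert a E) \<omega> =
    weighted_arrivals n k A c d z j E \<omega> * (1 - fails_ind k A c d a \<omega>)"
proof -
  define N where "N i q = renewal_count (\<lambda>m. A i m \<omega>) (grid (interleave c d) q) (grid (interleave c d) (Suc q))"
    for i q
  define \<delta> where "\<delta> i q = (if q = Suc (2 * a) \<and> i < k then 0 else (1::real))" for i q
  have pgf_arg_insert: "pgf_arg k z (insert a E) i q = pgf_arg k z E i q * \<delta> i q" for i q
    using a(1) by (auto simp: pgf_arg_def \<delta>_def elim!: oddE)
  have "weighted_arrivals n k A c d z j (insert a E) \<omega> =
      weighted_arrivals n k A c d z j E \<omega> * (\<Prod>i\<in>{1..n}. \<Prod>q<2 * Suc j. \<delta> i q ^ N i q)"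
    unfolding weighted_arrivals_def pgf_arg_insert power_mult_distrib prod.distrib N_def ..
  moreover have "(\<Prod>q<2 * Suc j. \<delta> i q ^ N i q) = (if i < k then 0 ^ N i (Suc (2 * a)) else 1)" for i
  proof -
    have mem: "Suc (2 * a) \<in> {..<2 * Suc j}" using a by auto
    have "(\<Prod>q\<in>{..<2 * Suc j} - {Suc (2 * a)}. \<delta> i q ^ N i q) = 1"
      by (intro prod.neutral) (auto simp: \<delta>_def)
    then show ?thesis
      using prod.remove[OF _ mem, of "\<lambda>q. \<delta> i q ^ N i q"] by (simp add: \<delta>_def)
  qed
  moreover have "{i\<in>{1..n}. i < k} = {1..<k}" using kn by auto
  then have "(\<Prod>i\<in>{1..n}. if i < k then (0::real) ^ N i (Suc (2 * a)) else 1) =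
      (\<Prod>i\<in>{1..<k}. 0 ^ N i (Suc (2 * a)))"
    by (simp add: prod.inter_filter[symmetric])
  moreover have "\<dots> = 1 - fails_ind k A c d a \<omega>"
    unfolding prod_zero_power[OF finite_atLeastLessThan] fails_ind_def resume_fails_iff_renewal_count N_def
    by auto
  ultimately show ?thesis by simp
qed

lemma weighted_arrivals_bounds:
  assumes z: "\<And>i. i \<in> {1..n} \<Longrightarrow> 0 \<le> z i \<and> z i \<le> 1"
  shows "0 \<le> weighted_arrivals n k A c d z j E \<omega>" "weighted_arrivals n k A c d z j E \<omega> \<le> 1"
proof -
  have p: "0 \<le> pgf_arg k z E i q" "pgf_arg k z E i q \<le> 1" if "i \<in> {1..n}" for i q
    using z[OF that] by (auto simp: pgf_arg_def)
  have inner: "0 \<le> (\<Prod>q<2 * Suc j. pgf_arg k z E i q ^ N q) \<and> (\<Prod>q<2 * Suc j. pgf_arg k z E i q ^ N q) \<le> 1"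
    if "i \<in> {1..n}" for i and N :: "nat \<Rightarrow> nat"
    by (intro conjI prod_nonneg prod_le_1 zero_le_power power_le_one p[OF that])
  show "0 \<le> weighted_arrivals n k A c d z j E \<omega>"
    unfolding weighted_arrivals_def by (rule prod_nonneg, rule inner[THEN conjunct1])
  show "weighted_arrivals n k A c d z j E \<omega> \<le> 1"
    unfolding weighted_arrivals_def by (rule prod_le_1, rule inner)
qed

lemma fails_ind_bounds: "0 \<le> fails_ind k A c d l \<omega>" "fails_ind k A c d l \<omega> \<le> 1"
  by (auto simp: fails_ind_def)

lemma arrival_sequence_measurable:
  "(\<And>m. A i m \<in> borel_measurable N) \<Longrightarrow> (\<lambda>\<omega> m. A i m \<omega>) \<in> N \<rightarrow>\<^sub>M PiM UNIV (\<lambda>_::nat. borel)"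
  by (rule measurable_PiM_single') auto

lemma weighted_arrivals_measurable[measurable]:
  assumes [measurable]: "\<And>i m. A i m \<in> borel_measurable N"
  shows "(\<lambda>\<omega>. weighted_arrivals n k A c d z j E \<omega>) \<in> borel_measurable N"
  unfolding weighted_arrivals_def
proof (intro borel_measurable_prod)
  fix i q
  show "(\<lambda>\<omega>. pgf_arg k z E i q ^
      renewal_count (\<lambda>m. A i m \<omega>) (grid (interleave c d) q) (grid (interleave c d) (Suc q)))
      \<in> borel_measurable N"
    by (rule measurable_compose[OF renewal_count_measurable[OF arrival_sequence_measurable]]) auto
qed

lemma fails_ind_measurable[measurable]:
  assumes [measurable]: "\<And>i m. A i m \<in> borel_measurable N"
  shows "(\<lambda>\<omega>. fails_ind k A c d l \<omega>) \<in> borel_measurable N"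
proof -
  have [measurable]: "(\<lambda>\<omega>. renewal_count (\<lambda>m. A i m \<omega>) a b) \<in> N \<rightarrow>\<^sub>M count_space UNIV" for i a b
    by (rule renewal_count_measurable[OF arrival_sequence_measurable]) auto
  show ?thesis unfolding fails_ind_def resume_fails_iff_renewal_count by measurable
qed

text \<open>The expectation of \<open>weighted_arrivals \<dots> E * (\<Prod>l\<in>F. fails_ind \<dots> l)\<close> for disjoint \<open>E\<close>
  and \<open>F\<close>, with \<open>LA = \<Lambda>(z)\<close> and \<open>LB = \<Lambda>\<^sub>\<ge>\<^sub>k(z) + \<lambda>\<^sub><\<^sub>k\<close>.\<close>

definition overhead_weight ::
  "nat \<Rightarrow> (nat \<Rightarrow> real) \<Rightarrow> (nat \<Rightarrow> real) \<Rightarrow> real \<Rightarrow> real \<Rightarrow> nat set \<Rightarrow> nat set \<Rightarrow> real" where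
  "overhead_weight j c d LA LB E F = (\<Prod>l<Suc j. exp (- LA * c l) *
     (if l \<in> E then exp (- LB * d l)
      else if l \<in> F then exp (- LA * d l) - exp (- LB * d l) else exp (- LA * d l)))"

lemma sum_lessThan_double: "(\<Sum>q<2 * N. f q) = (\<Sum>l<N. f (2 * l) + f (Suc (2 * l)))"
  for f :: "nat \<Rightarrow> real"
  by (induction N) (simp_all add: add.assoc)

lemma sum_split_at_class:
  fixes lam z :: "nat \<Rightarrow> real"
  assumes "1 \<le> k" "k \<le> n"
  shows "(\<Sum>i\<in>{1..n}. lam i * (1 - (if i < k then 0 else z i))) =
    (\<Sum>i\<in>{1..<k}. lam i) + (\<Sum>i\<in>{k..n}. lam i * (1 - z i))"
proof -
  define f where "f i = lam i * (1 - (if i < k then 0 else z i))" for i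
  have "{1..n} = {1..<k} \<union> {k..n}" using assms by auto
  moreover have "sum f ({1..<k} \<union> {k..n}) = sum f {1..<k} + sum f {k..n}"
    by (rule sum.union_disjoint) auto
  ultimately have "sum f {1..n} = sum f {1..<k} + sum f {k..n}"
    by simp
  then have "(\<Sum>i\<in>{1..n}. lam i * (1 - (if i < k then 0 else z i))) =
     (\<Sum>i\<in>{1..<k}. lam i * (1 - (if i < k then 0 else z i))) +
     (\<Sum>i\<in>{k..n}. lam i * (1 - (if i < k then 0 else z i)))"
    unfolding f_def by simp
  also have "\<dots> = (\<Sum>i\<in>{1..<k}. lam i) + (\<Sum>i\<in>{k..n}. lam i * (1 - z i))"
    by (intro arg_cong2[where f="(+)"] sum.cong) auto
  finally show ?thesis .
qed

lemma arrival_rates_bounds: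
  fixes lam z :: "nat \<Rightarrow> real"
  assumes k: "1 \<le> k" "k \<le> n" and lam: "\<And>i. i \<in> {1..n} \<Longrightarrow> 0 < lam i"
    and z: "\<And>i. i \<in> {1..n} \<Longrightarrow> 0 \<le> z i \<and> z i \<le> 1"
  shows "0 \<le> (\<Sum>i\<in>{1..n}. lam i * (1 - z i))"
    and "(\<Sum>i\<in>{1..n}. lam i * (1 - z i)) \<le> (\<Sum>i\<in>{1..<k}. lam i) + (\<Sum>i\<in>{k..n}. lam i * (1 - z i))"
proof -
  show "0 \<le> (\<Sum>i\<in>{1..n}. lam i * (1 - z i))"
    using lam z by (intro sum_nonneg mult_nonneg_nonneg) (auto intro: less_imp_le)
  have "(\<Sum>i\<in>{1..n}. lam i * (1 - z i)) \<le> (\<Sum>i\<in>{1..n}. lam i * (1 - (if i < k then 0 else z i)))"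
    using lam z by (intro sum_mono mult_left_mono) (auto intro: less_imp_le)
  then show "(\<Sum>i\<in>{1..n}. lam i * (1 - z i)) \<le> (\<Sum>i\<in>{1..<k}. lam i) + (\<Sum>i\<in>{k..n}. lam i * (1 - z i))"
    unfolding sum_split_at_class[OF k] .
qed

lemma poisson_weight_eq_overhead_weight:
  assumes k: "1 \<le> k" "k \<le> n"
  shows "(\<Prod>i\<in>{1..n}. exp (- lam i * (\<Sum>q<2 * Suc j. (1 - pgf_arg k z E i q) * interleave c d q))) =
    overhead_weight j c d (\<Sum>i\<in>{1..n}. lam i * (1 - z i))
      ((\<Sum>i\<in>{1..<k}. lam i) + (\<Sum>i\<in>{k..n}. lam i * (1 - z i))) E {}"
proof -
  define LA where "LA = (\<Sum>i\<in>{1..n}. lam i * (1 - z i))"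
  define LB where "LB = (\<Sum>i\<in>{1..<k}. lam i) + (\<Sum>i\<in>{k..n}. lam i * (1 - z i))"
  define \<kappa> where "\<kappa> q = (\<Sum>i\<in>{1..n}. lam i * (1 - pgf_arg k z E i q))" for q
  have \<kappa>_pause: "\<kappa> (2 * l) = LA" for l unfolding \<kappa>_def LA_def pgf_arg_def by simp
  have \<kappa>_resume: "\<kappa> (Suc (2 * l)) = (if l \<in> E then LB else LA)" for l
  proof (cases "l \<in> E")
    case True
    have "\<kappa> (Suc (2 * l)) = (\<Sum>i\<in>{1..n}. lam i * (1 - (if i < k then 0 else z i)))"
      unfolding \<kappa>_def pgf_arg_def using True by (intro sum.cong) auto
    then show ?thesis using True sum_split_at_class[OF k] by (simp add: LB_def)
  qed (simp add: \<kappa>_def LA_def pgf_arg_def)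
  have "(\<Sum>i\<in>{1..n}. lam i * (\<Sum>q<2 * Suc j. (1 - pgf_arg k z E i q) * interleave c d q))
      = (\<Sum>q<2 * Suc j. interleave c d q * \<kappa> q)"
    unfolding \<kappa>_def sum_distrib_left sum_distrib_right by (subst sum.swap) (simp add: algebra_simps)
  also have "\<dots> = (\<Sum>l<Suc j. c l * LA + d l * (if l \<in> E then LB else LA))"
    unfolding sum_lessThan_double \<kappa>_pause \<kappa>_resume by (simp add: interleave_def)
  finally have S: "(\<Sum>i\<in>{1..n}. lam i * (\<Sum>q<2 * Suc j. (1 - pgf_arg k z E i q) * interleave c d q)) =
     (\<Sum>l<Suc j. c l * LA + d l * (if l \<in> E then LB else LA))" .
  have "(\<Prod>i\<in>{1..n}. exp (- lam i * (\<Sum>q<2 * Suc j. (1 - pgf_arg k z E i q) * interleave c d q)))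
     = exp (- (\<Sum>i\<in>{1..n}. lam i * (\<Sum>q<2 * Suc j. (1 - pgf_arg k z E i q) * interleave c d q)))"
    by (simp add: exp_sum[symmetric] sum_negf[symmetric])
  also have "\<dots> = exp (- (\<Sum>l<Suc j. c l * LA + d l * (if l \<in> E then LB else LA)))"
    unfolding S ..
  also have "\<dots> = overhead_weight j c d LA LB E {}"
    unfolding overhead_weight_def sum_negf[symmetric] exp_sum[OF finite_lessThan]
    by (intro prod.cong refl) (simp add: exp_add[symmetric] algebra_simps)
  finally show ?thesis unfolding LA_def LB_def .
qed

lemma overhead_weight_insert:
  assumes "a \<notin> E" "a \<notin> F" "a < Suc j"
  shows "overhead_weight j c d LA LB E (insert a F) =
    overhead_weight j c d LA LB E F - overhead_weight j c d LA LB (insert a E) F"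
proof -
  define g where "g E F l = exp (- LA * c l) *
     (if l \<in> E then exp (- LB * d l)
      else if l \<in> F then exp (- LA * d l) - exp (- LB * d l) else exp (- LA * d l))" for E F l
  have mem: "a \<in> {..<Suc j}" using assms by simp
  have split: "overhead_weight j c d LA LB E F = g E F a * (\<Prod>l\<in>{..<Suc j} - {a}. g E F l)" for E F
    unfolding overhead_weight_def g_def[symmetric] by (rule prod.remove[OF _ mem]) simp
  have rest: "(\<Prod>l\<in>{..<Suc j} - {a}. g E' F' l) = (\<Prod>l\<in>{..<Suc j} - {a}. g E F l)"
    if "E' - {a} = E - {a}" "F' - {a} = F - {a}" for E' F'
  proof (intro prod.cong refl)
    fix l assume "l \<in> {..<Suc j} - {a}"
    then have "l \<in> E' \<longleftrightarrow> l \<in> E" "l \<in> F' \<longleftrightarrow> l \<in> F" using that by blast+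
    then show "g E' F' l = g E F l" unfolding g_def by simp
  qed
  have "(\<Prod>l\<in>{..<Suc j} - {a}. g E (insert a F) l) = (\<Prod>l\<in>{..<Suc j} - {a}. g E F l)"
    and "(\<Prod>l\<in>{..<Suc j} - {a}. g (insert a E) F l) = (\<Prod>l\<in>{..<Suc j} - {a}. g E F l)"
    by (rule rest; auto)+
  then show ?thesis
    unfolding split[of E "insert a F"] split[of E F] split[of "insert a E" F]
    using assms by (simp add: g_def algebra_simps)
qed

definition round_term ::
  "nat \<Rightarrow> nat \<Rightarrow> (nat \<Rightarrow> nat \<Rightarrow> 'a \<Rightarrow> real) \<Rightarrow> (nat \<Rightarrow> 'a \<Rightarrow> real) \<Rightarrow> (nat \<Rightarrow> 'a \<Rightarrow> real)
     \<Rightarrow> real \<Rightarrow> (nat \<Rightarrow> real) \<Rightarrow> nat \<Rightarrow> 'a \<Rightarrow> real" where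
  "round_term n k A Cs Ds \<theta> z j \<omega> =
    (if (\<forall>l<j. resume_fails k A Cs Ds l \<omega>) \<and> \<not> resume_fails k A Cs Ds j \<omega>
     then exp (- \<theta> * round_start Cs Ds (Suc j) \<omega>) *
          (\<Prod>i\<in>{1..n}. z i ^ arr_count A i 0 (round_start Cs Ds (Suc j) \<omega>) \<omega>)
     else 0)"

definition chain_integrand ::
  "nat \<Rightarrow> nat \<Rightarrow> (nat \<Rightarrow> nat \<Rightarrow> 'a \<Rightarrow> real) \<Rightarrow> (nat \<Rightarrow> 'a \<Rightarrow> real) \<Rightarrow> (nat \<Rightarrow> 'a \<Rightarrow> real)
     \<Rightarrow> real \<Rightarrow> (nat \<Rightarrow> real) \<Rightarrow> 'a \<Rightarrow> real" where
  "chain_integrand n k A Cs Ds \<theta> z \<omega> =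
     exp (- \<theta> * chain_len k A Cs Ds \<omega>) * (\<Prod>i\<in>{1..n}. z i ^ chain_arrivals k A Cs Ds i \<omega>)"

lemma round_term_nonneg: "(\<And>i. i \<in> {1..n} \<Longrightarrow> 0 \<le> z i) \<Longrightarrow> 0 \<le> round_term n k A Cs Ds \<theta> z j \<omega>"
  unfolding round_term_def by (auto intro!: mult_nonneg_nonneg prod_nonneg)

lemma chain_integrand_nonneg: "(\<And>i. i \<in> {1..n} \<Longrightarrow> 0 \<le> z i) \<Longrightarrow> 0 \<le> chain_integrand n k A Cs Ds \<theta> z \<omega>"
  unfolding chain_integrand_def by (auto intro!: mult_nonneg_nonneg prod_nonneg)

lemma round_term_sums:
  assumes ends: "\<exists>j. \<not> resume_fails k A Cs Ds j \<omega>"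
  shows "(\<lambda>j. round_term n k A Cs Ds \<theta> z j \<omega>) sums chain_integrand n k A Cs Ds \<theta> z \<omega>"
proof -
  define j0 where "j0 = (LEAST j. \<not> resume_fails k A Cs Ds j \<omega>)"
  have j0: "\<not> resume_fails k A Cs Ds j0 \<omega>" unfolding j0_def using ends by (rule LeastI_ex)
  have before: "resume_fails k A Cs Ds l \<omega>" if "l < j0" for l
    using not_less_Least[OF that[unfolded j0_def]] by simp
  have "((\<forall>l<j. resume_fails k A Cs Ds l \<omega>) \<and> \<not> resume_fails k A Cs Ds j \<omega>) \<longleftrightarrow> j = j0" for j
  proof
    assume a: "(\<forall>l<j. resume_fails k A Cs Ds l \<omega>) \<and> \<not> resume_fails k A Cs Ds j \<omega>"
    have "j0 \<le> j" unfolding j0_def using a by (intro Least_le) simp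
    moreover have "\<not> j0 < j" using a j0 by auto
    ultimately show "j = j0" by simp
  qed (use j0 before in auto)
  then have "round_term n k A Cs Ds \<theta> z j \<omega> = (if j = j0 then chain_integrand n k A Cs Ds \<theta> z \<omega> else 0)" for j
    unfolding round_term_def chain_integrand_def chain_len_def chain_arrivals_def j0_def by simp
  then show ?thesis
    using sums_single[of j0 "\<lambda>_. chain_integrand n k A Cs Ds \<theta> z \<omega>"] by (simp add: fun_eq_iff)
qed

lemma round_term_cong:
  assumes kn: "k \<le> Suc n" and A: "\<And>i m. i \<in> {1..n} \<Longrightarrow> A i m \<omega> = A' i m \<omega>'"
    and C: "\<And>l. Cs l \<omega> = Cs' l \<omega>'" and D: "\<And>l. Ds l \<omega> = Ds' l \<omega>'"
  shows "round_term n k A Cs Ds \<theta> z j \<omega> = round_term n k A' Cs' Ds' \<theta> z j \<omega>'"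
proof -
  have rs: "round_start Cs Ds l \<omega> = round_start Cs' Ds' l \<omega>'" for l
    unfolding round_start_def C D ..
  have ac: "arr_count A i a b \<omega> = arr_count A' i a b \<omega>'" if "i \<in> {1..n}" for i a b
    unfolding arr_count_def arr_time_def using A[OF that] by simp
  have rf: "resume_fails k A Cs Ds l \<omega> = resume_fails k A' Cs' Ds' l \<omega>'" for l
    unfolding resume_fails_def rs C D using ac kn by (intro bex_cong refl) auto
  show ?thesis unfolding round_term_def rf rs using ac by (auto intro!: prod.cong)
qed

lemma chain_integrand_cong:
  assumes kn: "k \<le> Suc n" and A: "\<And>i m. i \<in> {1..n} \<Longrightarrow> A i m \<omega> = A' i m \<omega>"
  shows "chain_integrand n k A Cs Ds \<theta> z \<omega> = chain_integrand n k A' Cs Ds \<theta> z \<omega>"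
proof -
  have ac: "arr_count A i a b \<omega> = arr_count A' i a b \<omega>" if "i \<in> {1..n}" for i a b
    unfolding arr_count_def arr_time_def using A[OF that] by simp
  have "resume_fails k A Cs Ds l \<omega> = resume_fails k A' Cs Ds l \<omega>" for l
    unfolding resume_fails_def using ac kn by (intro bex_cong refl) auto
  then have "chain_len k A Cs Ds \<omega> = chain_len k A' Cs Ds \<omega>"
    unfolding chain_len_def by simp
  then show ?thesis unfolding chain_integrand_def chain_arrivals_def using ac by (auto intro!: prod.cong)
qed

lemma prod_fails_ind_eq:
  "(\<Prod>l\<in>{..<j}. fails_ind k A c d l \<omega>) =
    (if \<forall>l<j. resume_fails k A (\<lambda>l _. c l) (\<lambda>l _. d l) l \<omega> then 1 else 0)"
  unfolding fails_ind_def by (induction j) (auto simp: less_Suc_eq)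

lemma round_term_fixed_overheads:
  assumes x: "\<And>i. i \<in> {1..n} \<Longrightarrow> renewal_seq (\<lambda>m. A i m \<omega>)"
    and c: "\<And>l. 0 \<le> c l" and d: "\<And>l. 0 \<le> d l" and kn: "k \<le> Suc n"
  shows "round_term n k A (\<lambda>l _. c l) (\<lambda>l _. d l) \<theta> z j \<omega> =
    exp (- \<theta> * (\<Sum>p<Suc j. c p + d p)) *
      (weighted_arrivals n k A c d z j {j} \<omega> * (\<Prod>l\<in>{..<j}. fails_ind k A c d l \<omega>))"
proof -
  have "weighted_arrivals n k A c d z j {} \<omega> =
      (\<Prod>i\<in>{1..n}. z i ^ arr_count A i 0 (round_start (\<lambda>l _. c l) (\<lambda>l _. d l) (Suc j) \<omega>) \<omega>)"
    unfolding weighted_arrivals_def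
  proof (intro prod.cong refl)
    fix i assume i: "i \<in> {1..n}"
    have "arr_count A i 0 (round_start (\<lambda>l _. c l) (\<lambda>l _. d l) (Suc j) \<omega>) \<omega> =
        renewal_count (\<lambda>m. A i m \<omega>) 0 (grid (interleave c d) (2 * Suc j))"
      unfolding arr_count_eq_renewal_count grid_interleave_even round_start_const ..
    also have "\<dots> = (\<Sum>q<2 * Suc j.
        renewal_count (\<lambda>m. A i m \<omega>) (grid (interleave c d) q) (grid (interleave c d) (Suc q)))"
      by (rule renewal_count_grid[OF x[OF i]]) (use interleave_nonneg c d in auto)
    finally show "(\<Prod>q<2 * Suc j. pgf_arg k z {} i q ^
          renewal_count (\<lambda>m. A i m \<omega>) (grid (interleave c d) q) (grid (interleave c d) (Suc q))) =
        z i ^ arr_count A i 0 (round_start (\<lambda>l _. c l) (\<lambda>l _. d l) (Suc j) \<omega>) \<omega>"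
      by (simp add: pgf_arg_def power_sum[symmetric] del: lessThan_Suc)
  qed
  moreover have "weighted_arrivals n k A c d z j {j} \<omega> =
      weighted_arrivals n k A c d z j {} \<omega> * (1 - fails_ind k A c d j \<omega>)"
    using weighted_arrivals_insert[of j "{}" j k n] kn by simp
  ultimately show ?thesis
    unfolding round_term_def round_start_const prod_fails_ind_eq by (auto simp: fails_ind_def)
qed

definition round_overhead ::
  "real \<Rightarrow> real \<Rightarrow> real \<Rightarrow> nat \<Rightarrow> (nat \<Rightarrow> real) \<Rightarrow> (nat \<Rightarrow> real) \<Rightarrow> real" where
  "round_overhead \<theta> LA LB j c d =
     (\<Prod>l<j. exp (- (\<theta> + LA) * c l) * (exp (- (\<theta> + LA) * d l) - exp (- (\<theta> + LB) * d l))) *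
     (exp (- (\<theta> + LA) * c j) * exp (- (\<theta> + LB) * d j))"

lemma round_overhead_eq_overhead_weight:
  "exp (- \<theta> * (\<Sum>p<Suc j. c p + d p)) * overhead_weight j c d LA LB {j} {..<j} = round_overhead \<theta> LA LB j c d"
proof -
  define G where "G p = (exp (- \<theta> * c p) * exp (- \<theta> * d p)) * (exp (- LA * c p) *
     (if p \<in> {j} then exp (- LB * d p)
      else if p \<in> {..<j} then exp (- LA * d p) - exp (- LB * d p) else exp (- LA * d p)))" for p
  have "exp (- \<theta> * (\<Sum>p<Suc j. c p + d p)) = (\<Prod>p<Suc j. exp (- \<theta> * c p) * exp (- \<theta> * d p))"
    by (simp add: exp_sum[symmetric] sum_distrib_left exp_add[symmetric] algebra_simps sum_negf[symmetric]
        flip: sum.distrib)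
  then have "exp (- \<theta> * (\<Sum>p<Suc j. c p + d p)) * overhead_weight j c d LA LB {j} {..<j} = (\<Prod>p<j. G p) * G j"
    unfolding overhead_weight_def G_def by (simp add: prod.distrib)
  also have "(\<Prod>p<j. G p) = (\<Prod>l<j. exp (- (\<theta> + LA) * c l) * (exp (- (\<theta> + LA) * d l) - exp (- (\<theta> + LB) * d l)))"
    unfolding G_def by (intro prod.cong refl) (simp add: algebra_simps exp_add[symmetric] exp_diff)
  also have "G j = exp (- (\<theta> + LA) * c j) * exp (- (\<theta> + LB) * d j)"
    unfolding G_def by (simp add: algebra_simps exp_add[symmetric])
  finally show ?thesis unfolding round_overhead_def .
qed

lemma round_overhead_bounds:
  assumes c: "\<And>l. 0 \<le> c l" and d: "\<And>l. 0 \<le> d l" and a: "0 \<le> \<theta> + LA" and ab: "LA \<le> LB"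
  shows "0 \<le> round_overhead \<theta> LA LB j c d" "round_overhead \<theta> LA LB j c d \<le> 1"
proof -
  have e: "0 \<le> exp (- x * y) \<and> exp (- x * y) \<le> 1" if "0 \<le> x" "0 \<le> y" for x y :: real
    using that by auto
  have diff: "0 \<le> exp (- (\<theta> + LA) * d l) - exp (- (\<theta> + LB) * d l) \<and>
      exp (- (\<theta> + LA) * d l) - exp (- (\<theta> + LB) * d l) \<le> 1" for l
  proof -
    have "exp (- (\<theta> + LB) * d l) \<le> exp (- (\<theta> + LA) * d l)"
      using ab d[of l] by (intro exp_mono) (simp add: mult_right_mono)
    moreover have "exp (- (\<theta> + LA) * d l) \<le> 1" "0 < exp (- (\<theta> + LB) * d l)"
      using e[OF a d[of l]] by auto
    ultimately show ?thesis by linarith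
  qed
  have b: "0 \<le> \<theta> + LB" using a ab by linarith
  show "0 \<le> round_overhead \<theta> LA LB j c d" "round_overhead \<theta> LA LB j c d \<le> 1"
    unfolding round_overhead_def using e[OF a c[of _]] e[OF b d[of j]] diff
    by (auto intro!: prod_nonneg prod_le_1 mult_le_one mult_nonneg_nonneg)
qed

definition overhead_factor :: "real \<Rightarrow> real \<Rightarrow> nat \<Rightarrow> src \<Rightarrow> real \<Rightarrow> real" where
  "overhead_factor a b j s x = (case s of
       Pause l \<Rightarrow> exp (- a * x)
     | Resume l \<Rightarrow> if l < j then exp (- a * x) - exp (- b * x) else exp (- b * x)
     | Arr _ _ \<Rightarrow> 1)"

lemma overhead_factor_measurable: "overhead_factor a b j s \<in> borel_measurable borel"
  unfolding overhead_factor_def by (cases s) auto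

lemma abs_overhead_factor_le_1:
  assumes "0 \<le> a" "0 \<le> b" "0 \<le> x" shows "\<bar>overhead_factor a b j s x\<bar> \<le> 1"
proof -
  have e: "0 < exp (- a * x)" "exp (- a * x) \<le> 1" "0 < exp (- b * x)" "exp (- b * x) \<le> 1"
    using assms by auto
  then have "\<bar>exp (- a * x)\<bar> \<le> 1" "\<bar>exp (- b * x)\<bar> \<le> 1" by auto
  moreover have "\<bar>exp (- a * x) - exp (- b * x)\<bar> \<le> 1"
    by (intro abs_leI) (use e in linarith)+
  ultimately show ?thesis unfolding overhead_factor_def by (auto split: src.split)
qed

lemma prod_atMost_if_less: "(\<Prod>l\<in>{..j}. if l < j then (x::real) else y) = x ^ j * y"
proof -
  have "(\<Prod>l\<in>{..j}. if l < j then x else y) = (\<Prod>l<j. if l < j then x else y) * y"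
    by (simp add: lessThan_Suc_atMost[symmetric])
  also have "(\<Prod>l<j. if l < j then x else y) = (\<Prod>l<j. x)" by (intro prod.cong) auto
  finally show ?thesis by simp
qed

lemma round_overhead_eq_prod_overhead_factor:
  "round_overhead \<theta> LA LB j (\<lambda>l. Cs l \<omega>) (\<lambda>l. Ds l \<omega>) =
    (\<Prod>s\<in>Pause ` {..j} \<union> Resume ` {..j}. overhead_factor (\<theta> + LA) (\<theta> + LB) j s (src_rv A Cs Ds s \<omega>))"
proof -
  let ?f = "overhead_factor (\<theta> + LA) (\<theta> + LB) j"
  have "(\<Prod>s\<in>Pause ` {..j} \<union> Resume ` {..j}. ?f s (src_rv A Cs Ds s \<omega>)) =
      (\<Prod>l\<in>{..j}. exp (- (\<theta> + LA) * Cs l \<omega>)) *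
      (\<Prod>l\<in>{..j}. if l < j then exp (- (\<theta> + LA) * Ds l \<omega>) - exp (- (\<theta> + LB) * Ds l \<omega>)
                  else exp (- (\<theta> + LB) * Ds l \<omega>))"
    by (subst prod.union_disjoint, auto, subst (1 2) prod.reindex)
       (auto simp: inj_on_def overhead_factor_def src_rv_def cong: if_cong)
  then show ?thesis
    unfolding round_overhead_def by (simp add: lessThan_Suc_atMost[symmetric] prod.distrib mult_ac)
qed

lemma arr_time_measurable[measurable]:
  assumes [measurable]: "\<And>m. A i m \<in> borel_measurable N"
  shows "(\<lambda>\<omega>. arr_time A i m \<omega>) \<in> borel_measurable N"
  unfolding arr_time_def by measurable

lemma arr_count_measurable[measurable]:
  assumes [measurable]: "\<And>m. A i m \<in> borel_measurable N" "a \<in> borel_measurable N" "b \<in> borel_measurable N"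
  shows "(\<lambda>\<omega>. arr_count A i (a \<omega>) (b \<omega>) \<omega>) \<in> N \<rightarrow>\<^sub>M count_space UNIV"
  unfolding arr_count_def by measurable

lemma round_start_measurable[measurable]:
  assumes [measurable]: "\<And>l. Cs l \<in> borel_measurable N" "\<And>l. Ds l \<in> borel_measurable N"
  shows "(\<lambda>\<omega>. round_start Cs Ds j \<omega>) \<in> borel_measurable N"
  unfolding round_start_def by measurable

context
  fixes N :: "'a measure" and A :: "nat \<Rightarrow> nat \<Rightarrow> 'a \<Rightarrow> real" and Cs Ds :: "nat \<Rightarrow> 'a \<Rightarrow> real"
  assumes [measurable]: "\<And>i m. A i m \<in> borel_measurable N"
    "\<And>l. Cs l \<in> borel_measurable N" "\<And>l. Ds l \<in> borel_measurable N"
begin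

lemma resume_fails_measurable[measurable]: "Measurable.pred N (\<lambda>\<omega>. resume_fails k A Cs Ds j \<omega>)"
  unfolding resume_fails_def by measurable

lemma round_term_measurable[measurable]: "(\<lambda>\<omega>. round_term n k A Cs Ds \<theta> z j \<omega>) \<in> borel_measurable N"
  unfolding round_term_def by measurable

lemma chain_len_measurable[measurable]: "(\<lambda>\<omega>. chain_len k A Cs Ds \<omega>) \<in> borel_measurable N"
proof -
  have "(\<lambda>\<omega>. LEAST j. \<not> resume_fails k A Cs Ds j \<omega>) \<in> N \<rightarrow>\<^sub>M count_space UNIV" by measurable
  then show ?thesis
    unfolding chain_len_def
    by (rule measurable_compose_countable'[where I=UNIV and f="\<lambda>j \<omega>. round_start Cs Ds (Suc j) \<omega>", rotated])
       auto
qed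

lemma chain_integrand_measurable[measurable]:
  "(\<lambda>\<omega>. chain_integrand n k A Cs Ds \<theta> z \<omega>) \<in> borel_measurable N"
proof -
  have [measurable]: "(\<lambda>\<omega>. chain_arrivals k A Cs Ds i \<omega>) \<in> N \<rightarrow>\<^sub>M count_space UNIV" for i
    unfolding chain_arrivals_def by measurable
  show ?thesis unfolding chain_integrand_def by measurable
qed

end

section \<open>Laplace--Stieltjes transforms of nonnegative distributions\<close>

context
  fixes P :: "real measure"
  assumes P: "prob_space P" and P_sets: "sets P = sets borel" and P_nonneg: "AE x in P. 0 \<le> x"
begin

lemma integrable_exp_neg_scaled:
  assumes t: "0 \<le> t" shows "integrable P (\<lambda>x. exp (- t * x))"
proof -
  interpret prob_space P by (rule P)
  have "AE x in P. norm (exp (- t * x)) \<le> 1" using P_nonneg by eventually_elim (use t in simp)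
  then show ?thesis
    by (rule integrable_const_bound) (simp add: measurable_cong_sets[OF P_sets refl])
qed

lemma lst_le_1: assumes t: "0 \<le> t" shows "lst P t \<le> 1"
proof -
  interpret prob_space P by (rule P)
  have "lst P t \<le> (\<integral>x. 1 \<partial>P)"
    unfolding lst_def using P_nonneg t
    by (intro integral_mono_AE[OF integrable_exp_neg_scaled[OF t]]) (auto elim!: eventually_mono)
  then show ?thesis by (simp add: prob_space)
qed

lemma lst_pos: assumes t: "0 \<le> t" shows "0 < lst P t"
proof -
  interpret prob_space P by (rule P)
  have "(\<integral>\<^sup>+x. ennreal (exp (- t * x)) \<partial>P) = ennreal (lst P t)"
    unfolding lst_def by (rule nn_integral_eq_integral[OF integrable_exp_neg_scaled[OF t]]) simp
  moreover have "(\<integral>\<^sup>+x. ennreal (exp (- t * x)) \<partial>P) \<noteq> 0"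
    by (subst nn_integral_0_iff_AE) (auto simp: measurable_cong_sets[OF P_sets refl])
  ultimately show ?thesis using lst_le_1[OF t] by (auto simp: ennreal_eq_0_iff not_less intro: antisym)
qed

lemma lst_antimono: assumes t: "0 \<le> t" "t \<le> t'" shows "lst P t' \<le> lst P t"
  unfolding lst_def
proof (rule integral_mono_AE[OF integrable_exp_neg_scaled integrable_exp_neg_scaled])
  show "AE x in P. exp (- t' * x) \<le> exp (- t * x)"
    using P_nonneg by eventually_elim (use t in \<open>auto intro: mult_right_mono\<close>)
qed (use t in auto)

lemma lst_0: "lst P 0 = 1"
proof -
  interpret prob_space P by (rule P)
  show ?thesis by (simp add: lst_def prob_space)
qed

end

lemma suminf_ennreal_geometric:
  fixes r s :: real assumes r: "0 \<le> r" "r < 1" and s: "0 \<le> s"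
  shows "(\<Sum>j. ennreal (r ^ j * s)) = ennreal (s / (1 - r))"
proof -
  have "(\<lambda>j. r ^ j * s) sums (1 / (1 - r) * s)"
    by (rule sums_mult2[OF geometric_sums]) (use r in auto)
  then show ?thesis
    by (subst suminf_ennreal2) (use r s in \<open>auto simp: sums_iff\<close>)
qed

lemma overhead_transform_eq_integral:
  "overhead_transform M n k A Cs Ds \<theta> z = (\<integral>\<omega>. chain_integrand n k A Cs Ds \<theta> z \<omega> \<partial>M)"
  by (simp add: overhead_transform_def chain_integrand_def)

section \<open>The overhead chain\<close>

locale overhead_chain = prob_space M
  for M :: "'a measure" and n k :: nat and lam :: "nat \<Rightarrow> real"
    and A :: "nat \<Rightarrow> nat \<Rightarrow> 'a \<Rightarrow> real" and Cs Ds :: "nat \<Rightarrow> 'a \<Rightarrow> real" and C D :: "real measure" +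
  assumes k: "1 \<le> k" "k \<le> n"
    and lam_pos: "\<And>i. i \<in> {1..n} \<Longrightarrow> 0 < lam i"
    and arr_exp: "\<And>i m. i \<in> {1..n} \<Longrightarrow> distributed M lborel (A i m) (exponential_density (lam i))"
    and arr_unused: "\<And>i m. i \<notin> {1..n} \<Longrightarrow> A i m = (\<lambda>_. 0)"
    and pause_measurable[measurable]: "\<And>j. Cs j \<in> borel_measurable M"
    and pause_distr: "\<And>j. distr M borel (Cs j) = C"
    and resume_measurable[measurable]: "\<And>j. Ds j \<in> borel_measurable M"
    and resume_distr: "\<And>j. distr M borel (Ds j) = D"
    and C_nonneg: "AE x in C. 0 \<le> x" and D_nonneg: "AE x in D. 0 \<le> x"
    and indep: "indep_vars (\<lambda>_. borel) (src_rv A Cs Ds)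
                  ({Arr i m | i m. i \<in> {1..n}} \<union> range Pause \<union> range Resume)"
begin

abbreviation Lam :: "(nat \<Rightarrow> real) \<Rightarrow> real" where
  "Lam z \<equiv> \<Sum>i\<in>{1..n}. lam i * (1 - z i)"

text \<open>\<open>Lam_succ z\<close> is \<open>\<Lambda>\<^sub>\<ge>\<^sub>k(z) + \<lambda>\<^sub><\<^sub>k\<close>: a resume of length \<open>d\<close> contributes the
  weight \<open>exp (- Lam_succ z * d)\<close> when it succeeds.\<close>

abbreviation Lam_succ :: "(nat \<Rightarrow> real) \<Rightarrow> real" where
  "Lam_succ z \<equiv> (\<Sum>i\<in>{1..<k}. lam i) + (\<Sum>i\<in>{k..n}. lam i * (1 - z i))"

lemma k_le_Suc_n: "k \<le> Suc n"
  using k by simp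

lemma arr_measurable[measurable]: "A i m \<in> borel_measurable M"
  using arr_exp[of i m] arr_unused[of i m] by (cases "i \<in> {1..n}") (auto simp: distributed_def)

lemma prob_space_C: "prob_space C" and sets_C: "sets C = sets borel"
  using prob_space_distr[OF pause_measurable[of 0]] by (simp_all flip: pause_distr[of 0])

lemma prob_space_D: "prob_space D" and sets_D: "sets D = sets borel"
  using prob_space_distr[OF resume_measurable[of 0]] by (simp_all flip: resume_distr[of 0])

lemmas lst_C_pos = lst_pos[OF prob_space_C sets_C C_nonneg]
  and lst_C_le_1 = lst_le_1[OF prob_space_C sets_C C_nonneg]
  and lst_D_pos = lst_pos[OF prob_space_D sets_D D_nonneg]
  and lst_D_le_1 = lst_le_1[OF prob_space_D sets_D D_nonneg]
  and lst_D_antimono = lst_antimono[OF prob_space_D sets_D D_nonneg]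

lemma integral_pause:
  fixes g :: "real \<Rightarrow> real"
  shows "g \<in> borel_measurable borel \<Longrightarrow> (\<integral>\<omega>. g (Cs l \<omega>) \<partial>M) = (\<integral>x. g x \<partial>C)"
  using integral_distr[OF pause_measurable[of l], of g] by (simp add: pause_distr)

lemma integral_resume:
  fixes g :: "real \<Rightarrow> real"
  shows "g \<in> borel_measurable borel \<Longrightarrow> (\<integral>\<omega>. g (Ds l \<omega>) \<partial>M) = (\<integral>x. g x \<partial>D)"
  using integral_distr[OF resume_measurable[of l], of g] by (simp add: resume_distr)

lemma AE_overheads_nonneg: "AE \<omega> in M. (\<forall>l. 0 \<le> Cs l \<omega>) \<and> (\<forall>l. 0 \<le> Ds l \<omega>)"
proof -
  have "AE \<omega> in M. 0 \<le> Cs l \<omega>" for l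
    using C_nonneg unfolding pause_distr[of l, symmetric] by (subst (asm) AE_distr_iff) auto
  moreover have "AE \<omega> in M. 0 \<le> Ds l \<omega>" for l
    using D_nonneg unfolding resume_distr[of l, symmetric] by (subst (asm) AE_distr_iff) auto
  ultimately show ?thesis by (simp add: AE_all_countable)
qed

lemma arr_sequence_distr: "i \<in> {1..n} \<Longrightarrow> distr M (PiM UNIV (\<lambda>_. borel)) (\<lambda>\<omega> m. A i m \<omega>) = Exp_seq (lam i)"
  using distr_sequence_eq_Exp_seq[OF indep, of "Arr i" "lam i"] by (auto simp: src_rv_def inj_def arr_exp)

lemma nn_integral_arrivals_pgf:
  assumes u: "\<And>p. 0 \<le> u p" and w: "\<And>i q. i \<in> {1..n} \<Longrightarrow> 0 \<le> w i q \<and> w i q \<le> 1"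
  shows "(\<integral>\<^sup>+\<omega>. ennreal (\<Prod>i\<in>{1..n}. \<Prod>q<Q. w i q ^
            renewal_count (\<lambda>m. A i m \<omega>) (grid u q) (grid u (Suc q))) \<partial>M)
       = ennreal (\<Prod>i\<in>{1..n}. exp (- lam i * (\<Sum>q<Q. (1 - w i q) * u q)))"
proof -
  have "(\<integral>\<^sup>+\<omega>. ennreal (\<Prod>i\<in>{1..n}. \<Prod>q<Q. w i q ^
            renewal_count (\<lambda>m. src_rv A Cs Ds (Arr i m) \<omega>) (grid u q) (grid u (Suc q))) \<partial>M)
       = ennreal (\<Prod>i\<in>{1..n}. exp (- lam i * (\<Sum>q<Q. (1 - w i q) * u q)))"
    by (rule nn_integral_renewal_count_pgf_classes[OF indep finite_atLeastAtMost _ _ _ _ lam_pos u w])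
       (auto simp: src_rv_def inj_def arr_exp)
  then show ?thesis by (simp add: src_rv_def)
qed

lemma AE_arrivals_renewal_seq: "AE \<omega> in M. \<forall>i\<in>{1..n}. renewal_seq (\<lambda>m. A i m \<omega>)"
proof (rule eventually_ball_finite[OF finite_atLeastAtMost], rule ballI)
  fix i assume i: "i \<in> {1..n}"
  have "{x \<in> space (PiM UNIV (\<lambda>_::nat. borel)). renewal_seq x} \<in> sets (PiM UNIV (\<lambda>_::nat. borel))"
    using renewal_seq_measurable[OF measurable_ident_sets[OF refl]] by (simp add: pred_def)
  moreover have "AE x in distr M (PiM UNIV (\<lambda>_. borel)) (\<lambda>\<omega> m. A i m \<omega>). renewal_seq x"
    unfolding arr_sequence_distr[OF i] by (rule AE_Exp_seq_renewal_seq[OF lam_pos[OF i]])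
  ultimately show "AE \<omega> in M. renewal_seq (\<lambda>m. A i m \<omega>)"
    by (subst (asm) AE_distr_iff) (auto intro: arrival_sequence_measurable)
qed

text \<open>Inclusion--exclusion over the failing resumes: \<open>fails_ind = 1 - (no class < k arrival)\<close>,
  and the latter is absorbed into \<open>weighted_arrivals\<close> as a generating-function argument 0.\<close>

lemma integral_weighted_arrivals_fails:
  assumes z: "\<And>i. i \<in> {1..n} \<Longrightarrow> 0 \<le> z i \<and> z i \<le> 1" and c: "\<And>l. 0 \<le> c l" and d: "\<And>l. 0 \<le> d l"
    and "F \<subseteq> {..j}" "E \<subseteq> {..j}" "E \<inter> F = {}"
  shows "(\<integral>\<omega>. weighted_arrivals n k A c d z j E \<omega> * (\<Prod>l\<in>F. fails_ind k A c d l \<omega>) \<partial>M) =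
    overhead_weight j c d (Lam z) (Lam_succ z) E F"
  using assms(4-6)
proof (induction F arbitrary: E rule: infinite_finite_induct)
  case (infinite F)
  then show ?case using finite_subset[OF infinite(2)] by auto
next
  case (empty E)
  have "(\<integral>\<omega>. weighted_arrivals n k A c d z j E \<omega> \<partial>M) =
      enn2real (\<integral>\<^sup>+\<omega>. ennreal (weighted_arrivals n k A c d z j E \<omega>) \<partial>M)"
    using weighted_arrivals_bounds[where A=A and n=n and z=z, OF z]
    by (intro integral_eq_nn_integral) (auto intro!: AE_I2)
  also have "(\<integral>\<^sup>+\<omega>. ennreal (weighted_arrivals n k A c d z j E \<omega>) \<partial>M) =
      ennreal (\<Prod>i\<in>{1..n}. exp (- lam i * (\<Sum>q<2 * Suc j. (1 - pgf_arg k z E i q) * interleave c d q)))"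
    unfolding weighted_arrivals_def
    by (rule nn_integral_arrivals_pgf) (use interleave_nonneg c d z in \<open>auto simp: pgf_arg_def\<close>)
  finally show ?case
    unfolding poisson_weight_eq_overhead_weight[OF k] by (simp add: overhead_weight_def prod_nonneg)
next
  case (insert a F E)
  have a: "a \<notin> E" "a \<le> j" using insert by auto
  have int: "integrable M (\<lambda>\<omega>. weighted_arrivals n k A c d z j E' \<omega> * (\<Prod>l\<in>F. fails_ind k A c d l \<omega>))" for E'
  proof (rule integrable_const_bound[where B=1])
    have "0 \<le> (\<Prod>l\<in>F. fails_ind k A c d l \<omega>)" "(\<Prod>l\<in>F. fails_ind k A c d l \<omega>) \<le> 1" for \<omega>
      by (auto intro!: prod_nonneg prod_le_1 simp: fails_ind_bounds)
    then show "AE \<omega> in M. norm (weighted_arrivals n k A c d z j E' \<omega> * (\<Prod>l\<in>F. fails_ind k A c d l \<omega>)) \<le> 1"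
      using weighted_arrivals_bounds[where A=A and n=n and z=z, OF z]
      by (intro AE_I2) (simp add: abs_mult mult_le_one)
  qed measurable
  have "weighted_arrivals n k A c d z j E \<omega> * (\<Prod>l\<in>insert a F. fails_ind k A c d l \<omega>) =
      weighted_arrivals n k A c d z j E \<omega> * (\<Prod>l\<in>F. fails_ind k A c d l \<omega>) -
      weighted_arrivals n k A c d z j (insert a E) \<omega> * (\<Prod>l\<in>F. fails_ind k A c d l \<omega>)" for \<omega>
    unfolding weighted_arrivals_insert[OF a k_le_Suc_n] prod.insert[OF insert(1,2)] by (simp add: algebra_simps)
  then have "(\<integral>\<omega>. weighted_arrivals n k A c d z j E \<omega> * (\<Prod>l\<in>insert a F. fails_ind k A c d l \<omega>) \<partial>M) =
      (\<integral>\<omega>. weighted_arrivals n k A c d z j E \<omega> * (\<Prod>l\<in>F. fails_ind k A c d l \<omega>) \<partial>M) -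
      (\<integral>\<omega>. weighted_arrivals n k A c d z j (insert a E) \<omega> * (\<Prod>l\<in>F. fails_ind k A c d l \<omega>) \<partial>M)"
    by (simp add: Bochner_Integration.integral_diff[OF int int])
  also have "\<dots> = overhead_weight j c d (Lam z) (Lam_succ z) E F -
      overhead_weight j c d (Lam z) (Lam_succ z) (insert a E) F"
    using insert by (simp add: insert.IH)
  also have "\<dots> = overhead_weight j c d (Lam z) (Lam_succ z) E (insert a F)"
    by (rule overhead_weight_insert[symmetric]) (use insert in auto)
  finally show ?case .
qed

lemma nn_integral_round_term_fixed_overheads:
  assumes z: "\<And>i. i \<in> {1..n} \<Longrightarrow> 0 \<le> z i \<and> z i \<le> 1" and c: "\<And>l. 0 \<le> c l" and d: "\<And>l. 0 \<le> d l"
  shows "(\<integral>\<^sup>+\<omega>. ennreal (round_term n k A (\<lambda>l _. c l) (\<lambda>l _. d l) \<theta> z j \<omega>) \<partial>M) =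
    ennreal (round_overhead \<theta> (Lam z) (Lam_succ z) j c d)"
proof -
  define e where "e = exp (- \<theta> * (\<Sum>p<Suc j. c p + d p))"
  define X where "X \<omega> = weighted_arrivals n k A c d z j {j} \<omega> * (\<Prod>l\<in>{..<j}. fails_ind k A c d l \<omega>)" for \<omega>
  have X_bounds: "0 \<le> X \<omega>" "X \<omega> \<le> 1" for \<omega>
  proof -
    have "0 \<le> (\<Prod>l<j. fails_ind k A c d l \<omega>)" "(\<Prod>l<j. fails_ind k A c d l \<omega>) \<le> 1"
      by (auto intro!: prod_nonneg prod_le_1 simp: fails_ind_bounds)
    then show "0 \<le> X \<omega>" "X \<omega> \<le> 1"
      unfolding X_def using weighted_arrivals_bounds[where A=A and n=n and z=z, OF z]
      by (simp_all add: mult_le_one)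
  qed
  have "(\<integral>\<^sup>+\<omega>. ennreal (round_term n k A (\<lambda>l _. c l) (\<lambda>l _. d l) \<theta> z j \<omega>) \<partial>M) = (\<integral>\<^sup>+\<omega>. ennreal (e * X \<omega>) \<partial>M)"
  proof (rule nn_integral_cong_AE)
    show "AE \<omega> in M. ennreal (round_term n k A (\<lambda>l _. c l) (\<lambda>l _. d l) \<theta> z j \<omega>) = ennreal (e * X \<omega>)"
      using AE_arrivals_renewal_seq
    proof eventually_elim
      case (elim \<omega>)
      have "round_term n k A (\<lambda>l _. c l) (\<lambda>l _. d l) \<theta> z j \<omega> = e * X \<omega>"
        unfolding e_def X_def by (rule round_term_fixed_overheads[OF _ c d k_le_Suc_n]) (use elim in auto)
      then show ?case by simp
    qed
  qed
  also have "\<dots> = ennreal (e * (\<integral>\<omega>. X \<omega> \<partial>M))"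
  proof -
    have "X \<in> borel_measurable M" unfolding X_def by measurable
    then have "integrable M X"
      by (rule integrable_const_bound[where B=1, rotated]) (use X_bounds in auto)
    then show ?thesis by (subst nn_integral_eq_integral) (use X_bounds in \<open>auto simp: e_def\<close>)
  qed
  also have "(\<integral>\<omega>. X \<omega> \<partial>M) = overhead_weight j c d (Lam z) (Lam_succ z) {j} {..<j}"
    unfolding X_def by (rule integral_weighted_arrivals_fails[where z=z, OF z c d]) auto
  finally show ?thesis unfolding e_def round_overhead_eq_overhead_weight .
qed

lemma integral_overhead_factor_pause:
  "(\<integral>\<omega>. overhead_factor a b j (Pause l) (Cs l \<omega>) \<partial>M) = lst C a"
  unfolding lst_def overhead_factor_def src.case by (rule integral_pause) simp

lemma integral_overhead_factor_resume:
  assumes "0 \<le> a" "0 \<le> b"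
  shows "(\<integral>\<omega>. overhead_factor a b j (Resume l) (Ds l \<omega>) \<partial>M) =
    (if l < j then lst D a - lst D b else lst D b)"
proof -
  have "(\<integral>x. overhead_factor a b j (Resume l) x \<partial>D) = (if l < j then lst D a - lst D b else lst D b)"
    using integrable_exp_neg_scaled[OF prob_space_D sets_D D_nonneg] assms
    by (auto simp: overhead_factor_def lst_def Bochner_Integration.integral_diff)
  then show ?thesis by (simp add: integral_resume[OF overhead_factor_measurable])
qed

lemma integral_round_overhead:
  assumes a: "0 \<le> \<theta> + LA" and b: "0 \<le> \<theta> + LB"
  shows "(\<integral>\<omega>. round_overhead \<theta> LA LB j (\<lambda>l. Cs l \<omega>) (\<lambda>l. Ds l \<omega>) \<partial>M) =
      (lst C (\<theta> + LA) * (lst D (\<theta> + LA) - lst D (\<theta> + LB))) ^ j * (lst C (\<theta> + LA) * lst D (\<theta> + LB))"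
proof -
  let ?J = "Pause ` {..j} \<union> Resume ` {..j}"
  let ?f = "overhead_factor (\<theta> + LA) (\<theta> + LB) j"
  have "(\<integral>\<omega>. round_overhead \<theta> LA LB j (\<lambda>l. Cs l \<omega>) (\<lambda>l. Ds l \<omega>) \<partial>M) =
      (\<Prod>s\<in>?J. \<integral>\<omega>. ?f s (src_rv A Cs Ds s \<omega>) \<partial>M)"
    unfolding round_overhead_eq_prod_overhead_factor[where A=A]
  proof (rule integral_prod_indep_vars_bounded[where X="src_rv A Cs Ds" and f="?f"])
    show "indep_vars (\<lambda>_. borel) (src_rv A Cs Ds) ?J"
      by (rule indep_vars_subset[OF indep]) auto
    fix s assume s: "s \<in> ?J"
    show "AE \<omega> in M. \<bar>?f s (src_rv A Cs Ds s \<omega>)\<bar> \<le> 1"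
      using AE_overheads_nonneg
    proof eventually_elim
      case (elim \<omega>)
      then show ?case using s a b by (auto simp: src_rv_def intro!: abs_overhead_factor_le_1)
    qed
  qed (auto simp: overhead_factor_measurable)
  also have "\<dots> = (\<Prod>l\<in>{..j}. lst C (\<theta> + LA)) *
      (\<Prod>l\<in>{..j}. if l < j then lst D (\<theta> + LA) - lst D (\<theta> + LB) else lst D (\<theta> + LB))"
    using a b
    by (subst prod.union_disjoint, auto, subst (1 2) prod.reindex)
       (auto simp: inj_on_def src_rv_def integral_overhead_factor_pause integral_overhead_factor_resume)
  finally show ?thesis by (simp add: prod_atMost_if_less power_mult_distrib mult_ac)
qed

text \<open>Conditioning on the overheads, which are independent of the arrivals.\<close>

lemma nn_integral_round_term_condition_overheads:
  "(\<integral>\<^sup>+\<omega>. ennreal (round_term n k A Cs Ds \<theta> z j \<omega>) \<partial>M) =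
   (\<integral>\<^sup>+\<omega>. \<integral>\<^sup>+\<omega>'. ennreal (round_term n k A (\<lambda>l _. Cs l \<omega>) (\<lambda>l _. Ds l \<omega>) \<theta> z j \<omega>') \<partial>M \<partial>M)"
proof -
  define K1 where "K1 = {Arr i m | i m. i \<in> {1..n}}"
  define K2 where "K2 = range Pause \<union> range Resume"
  define Xa where "Xa \<omega> = restrict (\<lambda>s. src_rv A Cs Ds s \<omega>) K1" for \<omega>
  define Xc where "Xc \<omega> = restrict (\<lambda>s. src_rv A Cs Ds s \<omega>) K2" for \<omega>
  let ?P = "PiM K2 (\<lambda>_. borel) \<Otimes>\<^sub>M PiM K1 (\<lambda>_. borel)"
  define AA where "AA i m p = (if i \<in> {1..n} then snd p (Arr i m) else 0)"
    for i m and p :: "(src \<Rightarrow> real) \<times> (src \<Rightarrow> real)"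
  define CC where "CC l p = fst p (Pause l)" for l and p :: "(src \<Rightarrow> real) \<times> (src \<Rightarrow> real)"
  define DD where "DD l p = fst p (Resume l)" for l and p :: "(src \<Rightarrow> real) \<times> (src \<Rightarrow> real)"
  have [measurable]: "AA i m \<in> borel_measurable ?P" for i m
  proof (cases "i \<in> {1..n}")
    case True
    then have "Arr i m \<in> K1" unfolding K1_def by auto
    then show ?thesis unfolding AA_def using True
      by (simp add: measurable_compose[OF measurable_snd measurable_component_singleton])
  next
    case False
    then have "AA i m = (\<lambda>p. 0)" by (auto simp: AA_def fun_eq_iff)
    then show ?thesis by simp
  qed
  have [measurable]: "CC l \<in> borel_measurable ?P" "DD l \<in> borel_measurable ?P" for l
    unfolding CC_def DD_def
    by (auto intro!: measurable_compose[OF measurable_fst measurable_component_singleton] simp: K2_def)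
  have "(\<integral>\<^sup>+\<omega>. ennreal (round_term n k A Cs Ds \<theta> z j \<omega>) \<partial>M) =
      (\<integral>\<^sup>+\<omega>. ennreal (round_term n k AA CC DD \<theta> z j (Xc \<omega>, Xa \<omega>)) \<partial>M)"
    by (intro nn_integral_cong arg_cong[where f=ennreal] round_term_cong[OF k_le_Suc_n])
       (auto simp: AA_def CC_def DD_def Xa_def Xc_def K1_def K2_def src_rv_def)
  also have "\<dots> = (\<integral>\<^sup>+\<omega>. \<integral>\<^sup>+\<omega>'. ennreal (round_term n k AA CC DD \<theta> z j (Xc \<omega>, Xa \<omega>')) \<partial>M \<partial>M)"
  proof (rule nn_integral_indep_var_iterated[where f="\<lambda>p. ennreal (round_term n k AA CC DD \<theta> z j p)"])
    show "indep_var (PiM K2 (\<lambda>_. borel)) Xc (PiM K1 (\<lambda>_. borel)) Xa"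
      unfolding Xa_def Xc_def by (rule indep_var_restrict[OF indep]) (auto simp: K1_def K2_def)
  qed measurable
  also have "\<dots> = (\<integral>\<^sup>+\<omega>. \<integral>\<^sup>+\<omega>'. ennreal (round_term n k A (\<lambda>l _. Cs l \<omega>) (\<lambda>l _. Ds l \<omega>) \<theta> z j \<omega>') \<partial>M \<partial>M)"
    by (intro nn_integral_cong arg_cong[where f=ennreal] round_term_cong[OF k_le_Suc_n])
       (auto simp: AA_def CC_def DD_def Xa_def Xc_def K1_def K2_def src_rv_def)
  finally show ?thesis .
qed

lemma nn_integral_round_term:
  assumes z: "\<And>i. i \<in> {1..n} \<Longrightarrow> 0 \<le> z i \<and> z i \<le> 1" and \<theta>: "0 \<le> \<theta>"
  shows "(\<integral>\<^sup>+\<omega>. ennreal (round_term n k A Cs Ds \<theta> z j \<omega>) \<partial>M) = ennreal (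
    (lst C (\<theta> + Lam z) * (lst D (\<theta> + Lam z) - lst D (\<theta> + Lam_succ z))) ^ j *
    (lst C (\<theta> + Lam z) * lst D (\<theta> + Lam_succ z)))"
proof -
  note rates = arrival_rates_bounds[where lam=lam and z=z, OF k lam_pos z]
  let ?R = "\<lambda>\<omega>. round_overhead \<theta> (Lam z) (Lam_succ z) j (\<lambda>l. Cs l \<omega>) (\<lambda>l. Ds l \<omega>)"
  have R_bounds: "AE \<omega> in M. 0 \<le> ?R \<omega> \<and> ?R \<omega> \<le> 1"
    using AE_overheads_nonneg by eventually_elim (use round_overhead_bounds rates \<theta> in auto)
  have "(\<integral>\<^sup>+\<omega>. ennreal (round_term n k A Cs Ds \<theta> z j \<omega>) \<partial>M) = (\<integral>\<^sup>+\<omega>. ennreal (?R \<omega>) \<partial>M)"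
    unfolding nn_integral_round_term_condition_overheads using AE_overheads_nonneg
    by (intro nn_integral_cong_AE, eventually_elim)
       (rule nn_integral_round_term_fixed_overheads[where z=z, OF z]; auto)
  also have "\<dots> = ennreal (\<integral>\<omega>. ?R \<omega> \<partial>M)"
  proof (rule nn_integral_eq_integral)
    show "integrable M ?R"
      by (rule integrable_const_bound[where B=1]) (use R_bounds in \<open>auto simp: round_overhead_def\<close>)
  qed (use R_bounds in auto)
  also have "(\<integral>\<omega>. ?R \<omega> \<partial>M) =
      (lst C (\<theta> + Lam z) * (lst D (\<theta> + Lam z) - lst D (\<theta> + Lam_succ z))) ^ j *
      (lst C (\<theta> + Lam z) * lst D (\<theta> + Lam_succ z))"
    by (rule integral_round_overhead) (use rates \<theta> in auto)
  finally show ?thesis .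
qed

text \<open>Taking \<open>\<theta> = 0\<close> and \<open>z = 1\<close>, the probabilities that the chain ends in round \<open>j\<close> are
  geometric with parameter \<open>lst D \<lambda>\<^sub><\<^sub>k > 0\<close> and add up to 1.\<close>

lemma AE_chain_ends: "AE \<omega> in M. \<exists>j. \<not> resume_fails k A Cs Ds j \<omega>"
proof -
  define S where "S = {\<omega> \<in> space M. \<exists>j. \<not> resume_fails k A Cs Ds j \<omega>}"
  have S_events: "S \<in> events" unfolding S_def by measurable
  define p where "p = lst D (\<Sum>i\<in>{1..<k}. lam i)"
  have "0 \<le> (\<Sum>i\<in>{1..<k}. lam i)" using lam_pos k by (intro sum_nonneg) (auto intro: less_imp_le)
  then have p: "0 < p" "p \<le> 1" using lst_D_pos lst_D_le_1 by (auto simp: p_def)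
  have round_prob: "(\<integral>\<^sup>+\<omega>. ennreal (round_term n k A Cs Ds 0 (\<lambda>_. 1) j \<omega>) \<partial>M) = ennreal ((1 - p) ^ j * p)" for j
    using nn_integral_round_term[of "\<lambda>_. 1" 0 j]
    by (simp add: lst_0[OF prob_space_C sets_C C_nonneg] lst_0[OF prob_space_D sets_D D_nonneg] p_def)
  have indicator_S: "(\<Sum>j. ennreal (round_term n k A Cs Ds 0 (\<lambda>_. 1) j \<omega>)) = indicator S \<omega>"
    if "\<omega> \<in> space M" for \<omega>
  proof (cases "\<exists>j. \<not> resume_fails k A Cs Ds j \<omega>")
    case True
    have sums: "(\<lambda>j. round_term n k A Cs Ds 0 (\<lambda>_. 1) j \<omega>) sums 1"
      using round_term_sums[OF True, of n 0 "\<lambda>_. 1"] by (simp add: chain_integrand_def)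
    have "(\<Sum>j. ennreal (round_term n k A Cs Ds 0 (\<lambda>_. 1) j \<omega>)) =
        ennreal (\<Sum>j. round_term n k A Cs Ds 0 (\<lambda>_. 1) j \<omega>)"
      by (rule suminf_ennreal2) (use sums round_term_nonneg[of n "\<lambda>_. 1"] in \<open>auto simp: sums_iff\<close>)
    then show ?thesis using sums True that by (simp add: sums_iff S_def)
  next
    case False
    then have "round_term n k A Cs Ds 0 (\<lambda>_. 1) j \<omega> = 0" for j by (simp add: round_term_def)
    then show ?thesis using False by (simp add: S_def)
  qed
  have "emeasure M S = (\<integral>\<^sup>+\<omega>. indicator S \<omega> \<partial>M)" using S_events by simp
  also have "\<dots> = (\<integral>\<^sup>+\<omega>. (\<Sum>j. ennreal (round_term n k A Cs Ds 0 (\<lambda>_. 1) j \<omega>)) \<partial>M)"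
    by (intro nn_integral_cong) (simp add: indicator_S)
  also have "\<dots> = (\<Sum>j. ennreal ((1 - p) ^ j * p))"
    unfolding round_prob[symmetric] by (rule nn_integral_suminf) measurable
  also have "\<dots> = 1"
    using p by (subst suminf_ennreal_geometric) auto
  finally have "AE \<omega> in M. \<omega> \<in> S"
    by (intro AE_prob_1) (simp add: emeasure_eq_measure)
  then show ?thesis by eventually_elim (simp add: S_def)
qed

lemma nn_integral_chain_integrand:
  assumes z: "\<And>i. i \<in> {1..n} \<Longrightarrow> 0 \<le> z i"
  shows "(\<integral>\<^sup>+\<omega>. ennreal (chain_integrand n k A Cs Ds \<theta> z \<omega>) \<partial>M) =
    (\<Sum>j. \<integral>\<^sup>+\<omega>. ennreal (round_term n k A Cs Ds \<theta> z j \<omega>) \<partial>M)"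
proof -
  have "(\<integral>\<^sup>+\<omega>. ennreal (chain_integrand n k A Cs Ds \<theta> z \<omega>) \<partial>M) =
      (\<integral>\<^sup>+\<omega>. (\<Sum>j. ennreal (round_term n k A Cs Ds \<theta> z j \<omega>)) \<partial>M)"
  proof (rule nn_integral_cong_AE)
    show "AE \<omega> in M. ennreal (chain_integrand n k A Cs Ds \<theta> z \<omega>) =
        (\<Sum>j. ennreal (round_term n k A Cs Ds \<theta> z j \<omega>))"
      using AE_chain_ends
    proof eventually_elim
      case (elim \<omega>)
      then have sums: "(\<lambda>j. round_term n k A Cs Ds \<theta> z j \<omega>) sums chain_integrand n k A Cs Ds \<theta> z \<omega>"
        by (rule round_term_sums)
      have "(\<Sum>j. ennreal (round_term n k A Cs Ds \<theta> z j \<omega>)) = ennreal (\<Sum>j. round_term n k A Cs Ds \<theta> z j \<omega>)"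
        by (rule suminf_ennreal2) (use sums round_term_nonneg[of n z, OF z] in \<open>auto simp: sums_iff\<close>)
      then show ?case using sums by (simp add: sums_iff)
    qed
  qed
  also have "\<dots> = (\<Sum>j. \<integral>\<^sup>+\<omega>. ennreal (round_term n k A Cs Ds \<theta> z j \<omega>) \<partial>M)"
    by (rule nn_integral_suminf) measurable
  finally show ?thesis .
qed

lemma overhead_transform_formula:
  assumes \<theta>: "0 \<le> \<theta>" and z: "\<And>i. i \<in> {1..n} \<Longrightarrow> 0 \<le> z i \<and> z i \<le> 1"
  shows "overhead_transform M n k A Cs Ds \<theta> z =
    lst C (\<theta> + Lam z) * lst D (\<theta> + Lam_succ z) /
    (1 - lst C (\<theta> + Lam z) * (lst D (\<theta> + Lam z) - lst D (\<theta> + Lam_succ z)))"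
proof -
  note rates = arrival_rates_bounds[where lam=lam and z=z, OF k lam_pos z]
  define r where "r = lst C (\<theta> + Lam z) * (lst D (\<theta> + Lam z) - lst D (\<theta> + Lam_succ z))"
  define s where "s = lst C (\<theta> + Lam z) * lst D (\<theta> + Lam_succ z)"
  have C: "0 < lst C (\<theta> + Lam z)" "lst C (\<theta> + Lam z) \<le> 1"
    using lst_C_pos lst_C_le_1 \<theta> rates by auto
  have D: "0 < lst D (\<theta> + Lam_succ z)" "lst D (\<theta> + Lam z) \<le> 1"
    "lst D (\<theta> + Lam_succ z) \<le> lst D (\<theta> + Lam z)"
    using lst_D_pos lst_D_le_1 lst_D_antimono \<theta> rates by auto
  have "r \<le> lst D (\<theta> + Lam z) - lst D (\<theta> + Lam_succ z)"
    unfolding r_def using C D by (intro mult_left_le_one_le) auto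
  then have r: "0 \<le> r" "r < 1" using C D by (auto simp: r_def)
  have s: "0 \<le> s" unfolding s_def using C D by simp
  have z0: "\<And>i. i \<in> {1..n} \<Longrightarrow> 0 \<le> z i" using z by blast
  have "(\<integral>\<^sup>+\<omega>. ennreal (chain_integrand n k A Cs Ds \<theta> z \<omega>) \<partial>M) =
      (\<Sum>j. \<integral>\<^sup>+\<omega>. ennreal (round_term n k A Cs Ds \<theta> z j \<omega>) \<partial>M)"
    by (rule nn_integral_chain_integrand) (rule z0)
  also have "\<dots> = (\<Sum>j. ennreal (r ^ j * s))"
    by (rule suminf_cong, rule nn_integral_round_term[where z=z and \<theta>=\<theta>, OF z \<theta>, folded r_def s_def])
  also have "\<dots> = ennreal (s / (1 - r))"
    by (rule suminf_ennreal_geometric[OF r s])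
  finally have "(\<integral>\<omega>. chain_integrand n k A Cs Ds \<theta> z \<omega> \<partial>M) = s / (1 - r)"
    using r s chain_integrand_nonneg[of n z, OF z0] by (subst integral_eq_nn_integral) (auto intro!: AE_I2)
  then show ?thesis unfolding overhead_transform_eq_integral r_def s_def .
qed

end

theorem mainTheorem8:
  fixes M :: "'a measure" and n k :: nat and lam :: "nat \<Rightarrow> real"
    and A :: "nat \<Rightarrow> nat \<Rightarrow> 'a \<Rightarrow> real" and Cs Ds :: "nat \<Rightarrow> 'a \<Rightarrow> real"
    and C D :: "real measure" and \<theta> :: real and z :: "nat \<Rightarrow> real"
  assumes M: "prob_space M"
    and k: "1 \<le> k" "k \<le> n"
    and lam_pos: "\<And>i. i \<in> {1..n} \<Longrightarrow> lam i > 0"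
    and arr_exp: "\<And>i m. i \<in> {1..n} \<Longrightarrow> distributed M lborel (A i m) (exponential_density (lam i))"
    and pause_rv: "\<And>j. Cs j \<in> borel_measurable M" "\<And>j. distr M borel (Cs j) = C"
    and resume_rv: "\<And>j. Ds j \<in> borel_measurable M" "\<And>j. distr M borel (Ds j) = D"
    and C_nonneg: "AE x in C. 0 \<le> x"
    and D_nonneg: "AE x in D. 0 \<le> x"
    and indep: "prob_space.indep_vars M (\<lambda>_. borel) (src_rv A Cs Ds)
                  ({Arr i m | i m. i \<in> {1..n}} \<union> range Pause \<union> range Resume)"
    and \<theta>: "0 \<le> \<theta>"
    and z: "\<And>i. i \<in> {1..n} \<Longrightarrow> z i \<in> {0..1}"
  shows
    "let Lam = (\<Sum>i\<in>{1..n}. lam i * (1 - z i));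
         Lam_ge = (\<Sum>i\<in>{k..n}. lam i * (1 - z i));
         lam_lt = (\<Sum>i\<in>{1..<k}. lam i)
     in overhead_transform M n k A Cs Ds \<theta> z =
        lst C (\<theta> + Lam) * lst D (\<theta> + Lam_ge + lam_lt) /
        (1 - lst C (\<theta> + Lam) * (lst D (\<theta> + Lam) - lst D (\<theta> + Lam_ge + lam_lt)))"
proof -
  interpret prob_space M by (rule M)
  define A0 where "A0 i m = (if i \<in> {1..n} then A i m else (\<lambda>_. 0))" for i m
  have A0: "i \<in> {1..n} \<Longrightarrow> A0 i m = A i m" for i m by (simp add: A0_def)
  have "indep_vars (\<lambda>_. borel) (src_rv A0 Cs Ds)
      ({Arr i m | i m. i \<in> {1..n}} \<union> range Pause \<union> range Resume)"
    by (rule indep_vars_cong[THEN iffD1, OF refl _ refl indep]) (auto simp: src_rv_def A0 fun_eq_iff)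
  then interpret chain: overhead_chain M n k lam A0 Cs Ds C D
    using k lam_pos arr_exp pause_rv resume_rv C_nonneg D_nonneg A0
    by unfold_locales (auto simp: A0_def)
  have "overhead_transform M n k A Cs Ds \<theta> z = overhead_transform M n k A0 Cs Ds \<theta> z"
    unfolding overhead_transform_eq_integral using k A0
    by (intro Bochner_Integration.integral_cong refl chain_integrand_cong) auto
  moreover have "\<And>i. i \<in> {1..n} \<Longrightarrow> 0 \<le> z i \<and> z i \<le> 1" using z by auto
  ultimately show ?thesis
    using chain.overhead_transform_formula[where z=z, OF \<theta>] by (simp add: Let_def add_ac)
qed

end
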